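(* Let $\mathcal{V}$ be a (left) skew-monoidal category, $\mathcal{A}$ a category, and $\ast\colon\mathcal{V}\times\mathcal{A}\to\mathcal{A}$ and $\underline{\mathcal{A}}(-,-)\colon\mathcal{A}^{\mathrm{op}}\times\mathcal{A}\to\mathcal{V}$ functors. Given an isomorphism $\mathcal{A}(X\ast A,B)\cong\mathcal{V}(X,\underline{\mathcal{A}}(A,B))$ natural in $X,A,B$, there is a bijection between skew $\mathcal{V}$-actegory structures extending $(\mathcal{A},\ast)$ and skew $\mathcal{V}$-category structures extending $(\mathcal{A},\underline{\mathcal{A}}(-,-))$. Moreover, if $\mathcal{V}$ is monoidal closed, then there is a bijection between $\mathcal{V}$-actegory structures extending $(\mathcal{A},\ast)$ and tensored $\mathcal{V}$-category structures extending $(\mathcal{A},\underline{\mathcal{A}}(-,-))$.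
   Context: A (left) skew-monoidal category $(\mathcal{V},\otimes,I,a,l,r)$ is a category with a functor $\otimes$, an object $I$, and natural transformations (not necessarily invertible) $a\colon (X\otimes Y)\otimes Z\to X\otimes(Y\otimes Z)$, $l\colon I\otimes X\to X$, $r\colon X\to X\otimes I$, satisfying: $(1\otimes a)\circ a\circ(a\otimes 1)=a\circ a$; $l_{X\otimes Y}\circ a_{I,X,Y}=l_X\otimes 1_Y$; $(1_X\otimes l_Y)\circ a_{X,I,Y}\circ(r_X\otimes 1_Y)=1$; $a_{X,Y,I}\circ r_{X\otimes Y}=1_X\otimes r_Y$; $l_I\circ r_I=1_I$. It is monoidal closed if $a,l,r$ are invertible and each $-\otimes Y$ has a right adjoint $[Y,-]$. A skew $\mathcal{V}$-actegory structure extending $(\mathcal{A},\ast)$ consists of natural transformations (not necessarily invertible) $a\colon(X\otimes Y)\ast A\to X\ast(Y\ast A)$, $l\colon I\ast A\to A$ such that $(1_X\ast a_{Y,Z,A})\circ a_{X,Y\otimes Z,A}\circ(a_{X,Y,Z}\ast1_A)=a_{X,Y,Z\ast A}\circ a_{X\otimes Y,Z,A}$, $l_{X\ast A}\circ a_{I,X,A}=l_X\ast1_A$, and $(1_X\ast l_A)\circ a_{X,I,A}\circ(r_X\ast1_A)=1_{X\ast A}$. It is a $\mathcal{V}$-actegory structure if $a$ and $l$ are invertible. A skew $\mathcal{V}$-category structure extending $(\mathcal{A},\underline{\mathcal{A}}(-,-))$ consists of natural transformations $M\colon\underline{\mathcal{A}}(B,C)\otimes\underline{\mathcal{A}}(A,B)\to\underline{\mathcal{A}}(A,C)$,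 $j\colon I\to\underline{\mathcal{A}}(A,A)$ (natural with respect to morphisms of $\mathcal{A}$) with $M\circ(1\otimes M)\circ a=M\circ(M\otimes 1)$, $M\circ(j\otimes 1)=l$, $M\circ(1\otimes j)\circ r=1$. It is normal if each function $\mathcal{A}(A,B)\to\mathcal{V}(I,\underline{\mathcal{A}}(A,B))$, $f\mapsto\underline{\mathcal{A}}(A,f)\circ j_A$, is a bijection (so that it amounts to an ordinary $\mathcal{V}$-category with underlying category $\mathcal{A}$). For $\mathcal{V}$ monoidal closed, a tensored $\mathcal{V}$-category structure extending $(\mathcal{A},\underline{\mathcal{A}}(-,-))$ is a normal such structure for which, writing $\eta_{Y,A}\colon Y\to\underline{\mathcal{A}}(A,Y\ast A)$ for the morphism corresponding to $1_{Y\ast A}$ under the given isomorphism, each morphism $k\colon\underline{\mathcal{A}}(Y\ast A,C)\to[Y,\underline{\mathcal{A}}(A,C)]$ adjunct to $M\circ(1\otimes\eta_{Y,A})\colon\underline{\mathcal{A}}(Y\ast A,C)\otimes Y\to\underline{\mathcal{A}}(A,C)$ is invertible. *)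

theory Defs
  imports Main
begin

record ('o,'m) cat =
  obj :: "'o set"
  arr :: "'m set"
  src :: "'m \<Rightarrow> 'o"
  tgt :: "'m \<Rightarrow> 'o"
  cmp :: "'m \<Rightarrow> 'm \<Rightarrow> 'm"   (* cmp C g f  =  g \<circ> f *)
  ide :: "'o \<Rightarrow> 'm"

definition hom :: "('o,'m,'z) cat_scheme \<Rightarrow> 'o \<Rightarrow> 'o \<Rightarrow> 'm set" where
  "hom C x y = {f \<in> arr C. src C f = x \<and> tgt C f = y}"

definition is_cat :: "('o,'m,'z) cat_scheme \<Rightarrow> bool" where
  "is_cat C \<longleftrightarrow>
     (\<forall>f \<in> arr C. src C f \<in> obj C \<and> tgt C f \<in> obj C) \<and>
     (\<forall>x \<in> obj C. ide C x \<in> hom C x x) \<and>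
     (\<forall>f \<in> arr C. \<forall>g \<in> arr C. tgt C f = src C g \<longrightarrow> cmp C g f \<in> hom C (src C f) (tgt C g)) \<and>
     (\<forall>f \<in> arr C. \<forall>g \<in> arr C. \<forall>h \<in> arr C. tgt C f = src C g \<longrightarrow> tgt C g = src C h \<longrightarrow>
        cmp C h (cmp C g f) = cmp C (cmp C h g) f) \<and>
     (\<forall>f \<in> arr C. cmp C (ide C (tgt C f)) f = f \<and> cmp C f (ide C (src C f)) = f)"

definition iso_in :: "('o,'m,'z) cat_scheme \<Rightarrow> 'm \<Rightarrow> bool" where
  "iso_in C f \<longleftrightarrow> f \<in> arr C \<and>
     (\<exists>g \<in> hom C (tgt C f) (src C f). cmp C g f = ide C (src C f) \<and> cmp C f g = ide C (tgt C f))"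

definition bifunctor ::
  "('a,'b,'z1) cat_scheme \<Rightarrow> ('c,'d,'z2) cat_scheme \<Rightarrow> ('e,'f,'z3) cat_scheme \<Rightarrow>
   ('a \<Rightarrow> 'c \<Rightarrow> 'e) \<Rightarrow> ('b \<Rightarrow> 'd \<Rightarrow> 'f) \<Rightarrow> bool" where
  "bifunctor C D E Fo Fm \<longleftrightarrow>
     (\<forall>x \<in> obj C. \<forall>y \<in> obj D. Fo x y \<in> obj E) \<and>
     (\<forall>f \<in> arr C. \<forall>g \<in> arr D. Fm f g \<in> hom E (Fo (src C f) (src D g)) (Fo (tgt C f) (tgt D g))) \<and>
     (\<forall>x \<in> obj C. \<forall>y \<in> obj D. Fm (ide C x) (ide D y) = ide E (Fo x y)) \<and>
     (\<forall>f \<in> arr C. \<forall>f' \<in> arr C. \<forall>g \<in> arr D. \<forall>g' \<in> arr D.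
        tgt C f = src C f' \<longrightarrow> tgt D g = src D g' \<longrightarrow>
        Fm (cmp C f' f) (cmp D g' g) = cmp E (Fm f' g') (Fm f g))"

definition homfunctor ::
  "('c,'d,'z2) cat_scheme \<Rightarrow> ('e,'f,'z3) cat_scheme \<Rightarrow>
   ('c \<Rightarrow> 'c \<Rightarrow> 'e) \<Rightarrow> ('d \<Rightarrow> 'd \<Rightarrow> 'f) \<Rightarrow> bool" where
  "homfunctor C E Ho Hm \<longleftrightarrow>
     (\<forall>x \<in> obj C. \<forall>y \<in> obj C. Ho x y \<in> obj E) \<and>
     (\<forall>f \<in> arr C. \<forall>g \<in> arr C. Hm f g \<in> hom E (Ho (tgt C f) (src C g)) (Ho (src C f) (tgt C g))) \<and>
     (\<forall>x \<in> obj C. \<forall>y \<in> obj C. Hm (ide C x) (ide C y) = ide E (Ho x y)) \<and>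
     (\<forall>f \<in> arr C. \<forall>f' \<in> arr C. \<forall>g \<in> arr C. \<forall>g' \<in> arr C.
        tgt C f = src C f' \<longrightarrow> tgt C g = src C g' \<longrightarrow>
        Hm (cmp C f' f) (cmp C g' g) = cmp E (Hm f g') (Hm f' g))"

record ('o,'m) smcat = "('o,'m) cat" +
  tns  :: "'o \<Rightarrow> 'o \<Rightarrow> 'o"
  tnsm :: "'m \<Rightarrow> 'm \<Rightarrow> 'm"
  unt  :: "'o"
  asc  :: "'o \<Rightarrow> 'o \<Rightarrow> 'o \<Rightarrow> 'm"
  lu   :: "'o \<Rightarrow> 'm"
  ru   :: "'o \<Rightarrow> 'm"

definition skew_monoidal :: "('o,'m,'z) smcat_scheme \<Rightarrow> bool" where
  "skew_monoidal V \<longleftrightarrow> is_cat V \<and> bifunctor V V V (tns V) (tnsm V) \<and> unt V \<in> obj V \<and>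
    (\<forall>X \<in> obj V. \<forall>Y \<in> obj V. \<forall>Z \<in> obj V.
       asc V X Y Z \<in> hom V (tns V (tns V X Y) Z) (tns V X (tns V Y Z))) \<and>
    (\<forall>X \<in> obj V. lu V X \<in> hom V (tns V (unt V) X) X) \<and>
    (\<forall>X \<in> obj V. ru V X \<in> hom V X (tns V X (unt V))) \<and>
    (\<forall>f \<in> arr V. \<forall>g \<in> arr V. \<forall>h \<in> arr V.
       cmp V (asc V (tgt V f) (tgt V g) (tgt V h)) (tnsm V (tnsm V f g) h) =
       cmp V (tnsm V f (tnsm V g h)) (asc V (src V f) (src V g) (src V h))) \<and>
    (\<forall>f \<in> arr V. cmp V (lu V (tgt V f)) (tnsm V (ide V (unt V)) f) = cmp V f (lu V (src V f))) \<and>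
    (\<forall>f \<in> arr V. cmp V (ru V (tgt V f)) f = cmp V (tnsm V f (ide V (unt V))) (ru V (src V f))) \<and>
    (\<forall>W \<in> obj V. \<forall>X \<in> obj V. \<forall>Y \<in> obj V. \<forall>Z \<in> obj V.
       cmp V (tnsm V (ide V W) (asc V X Y Z))
         (cmp V (asc V W (tns V X Y) Z) (tnsm V (asc V W X Y) (ide V Z))) =
       cmp V (asc V W X (tns V Y Z)) (asc V (tns V W X) Y Z)) \<and>
    (\<forall>X \<in> obj V. \<forall>Y \<in> obj V.
       cmp V (lu V (tns V X Y)) (asc V (unt V) X Y) = tnsm V (lu V X) (ide V Y)) \<and>
    (\<forall>X \<in> obj V. \<forall>Y \<in> obj V.
       cmp V (tnsm V (ide V X) (lu V Y)) (cmp V (asc V X (unt V) Y) (tnsm V (ru V X) (ide V Y)))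
         = ide V (tns V X Y)) \<and>
    (\<forall>X \<in> obj V. \<forall>Y \<in> obj V.
       cmp V (asc V X Y (unt V)) (ru V (tns V X Y)) = tnsm V (ide V X) (ru V Y)) \<and>
    cmp V (lu V (unt V)) (ru V (unt V)) = ide V (unt V)"

text \<open>ev : Q \<otimes> Y \<rightarrow> Z exhibits Q as [Y,Z] (a universal arrow from - \<otimes> Y to Z).
  V is closed iff such universal arrows exist for all Y, Z, i.e. iff each - \<otimes> Y has a right adjoint.\<close>
definition is_eval :: "('o,'m,'z) smcat_scheme \<Rightarrow> 'o \<Rightarrow> 'o \<Rightarrow> 'o \<Rightarrow> 'm \<Rightarrow> bool" where
  "is_eval V Y Z Q ev \<longleftrightarrow> Q \<in> obj V \<and> ev \<in> hom V (tns V Q Y) Z \<and>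
     (\<forall>X \<in> obj V. \<forall>f \<in> hom V (tns V X Y) Z.
        \<exists>!g. g \<in> hom V X Q \<and> cmp V ev (tnsm V g (ide V Y)) = f)"

definition monoidal_closed :: "('o,'m,'z) smcat_scheme \<Rightarrow> bool" where
  "monoidal_closed V \<longleftrightarrow> skew_monoidal V \<and>
     (\<forall>X \<in> obj V. \<forall>Y \<in> obj V. \<forall>Z \<in> obj V. iso_in V (asc V X Y Z)) \<and>
     (\<forall>X \<in> obj V. iso_in V (lu V X) \<and> iso_in V (ru V X)) \<and>
     (\<forall>Y \<in> obj V. \<forall>Z \<in> obj V. \<exists>Q ev. is_eval V Y Z Q ev)"

text \<open>A structure is a pair (\<alpha>, lm) of families, taken extensional (undefined off objects).\<close>
definition skew_actegory_str ::
  "('o,'v,'z1) smcat_scheme \<Rightarrow> ('p,'q,'z2) cat_scheme \<Rightarrow> ('o \<Rightarrow> 'p \<Rightarrow> 'p) \<Rightarrow> ('v \<Rightarrow> 'q \<Rightarrow> 'q) \<Rightarrow>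
   ('o \<Rightarrow> 'o \<Rightarrow> 'p \<Rightarrow> 'q) \<times> ('p \<Rightarrow> 'q) \<Rightarrow> bool" where
  "skew_actegory_str V A ao am s \<longleftrightarrow> (case s of (\<alpha>, lm) \<Rightarrow>
    (\<forall>X Y B. \<not> (X \<in> obj V \<and> Y \<in> obj V \<and> B \<in> obj A) \<longrightarrow> \<alpha> X Y B = undefined) \<and>
    (\<forall>B. B \<notin> obj A \<longrightarrow> lm B = undefined) \<and>
    (\<forall>X \<in> obj V. \<forall>Y \<in> obj V. \<forall>B \<in> obj A.
       \<alpha> X Y B \<in> hom A (ao (tns V X Y) B) (ao X (ao Y B))) \<and>
    (\<forall>B \<in> obj A. lm B \<in> hom A (ao (unt V) B) B) \<and>
    (\<forall>x \<in> arr V. \<forall>y \<in> arr V. \<forall>u \<in> arr A.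
       cmp A (\<alpha> (tgt V x) (tgt V y) (tgt A u)) (am (tnsm V x y) u) =
       cmp A (am x (am y u)) (\<alpha> (src V x) (src V y) (src A u))) \<and>
    (\<forall>u \<in> arr A. cmp A (lm (tgt A u)) (am (ide V (unt V)) u) = cmp A u (lm (src A u))) \<and>
    (\<forall>X \<in> obj V. \<forall>Y \<in> obj V. \<forall>Z \<in> obj V. \<forall>B \<in> obj A.
       cmp A (am (ide V X) (\<alpha> Y Z B))
         (cmp A (\<alpha> X (tns V Y Z) B) (am (asc V X Y Z) (ide A B))) =
       cmp A (\<alpha> X Y (ao Z B)) (\<alpha> (tns V X Y) Z B)) \<and>
    (\<forall>X \<in> obj V. \<forall>B \<in> obj A.
       cmp A (lm (ao X B)) (\<alpha> (unt V) X B) = am (lu V X) (ide A B)) \<and>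
    (\<forall>X \<in> obj V. \<forall>B \<in> obj A.
       cmp A (am (ide V X) (lm B)) (cmp A (\<alpha> X (unt V) B) (am (ru V X) (ide A B)))
         = ide A (ao X B)))"

definition actegory_str ::
  "('o,'v,'z1) smcat_scheme \<Rightarrow> ('p,'q,'z2) cat_scheme \<Rightarrow> ('o \<Rightarrow> 'p \<Rightarrow> 'p) \<Rightarrow> ('v \<Rightarrow> 'q \<Rightarrow> 'q) \<Rightarrow>
   ('o \<Rightarrow> 'o \<Rightarrow> 'p \<Rightarrow> 'q) \<times> ('p \<Rightarrow> 'q) \<Rightarrow> bool" where
  "actegory_str V A ao am s \<longleftrightarrow> skew_actegory_str V A ao am s \<and> (case s of (\<alpha>, lm) \<Rightarrow>
    (\<forall>X \<in> obj V. \<forall>Y \<in> obj V. \<forall>B \<in> obj A. iso_in A (\<alpha> X Y B)) \<and>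
    (\<forall>B \<in> obj A. iso_in A (lm B)))"

definition skew_vcat_str ::
  "('o,'v,'z1) smcat_scheme \<Rightarrow> ('p,'q,'z2) cat_scheme \<Rightarrow> ('p \<Rightarrow> 'p \<Rightarrow> 'o) \<Rightarrow> ('q \<Rightarrow> 'q \<Rightarrow> 'v) \<Rightarrow>
   ('p \<Rightarrow> 'p \<Rightarrow> 'p \<Rightarrow> 'v) \<times> ('p \<Rightarrow> 'v) \<Rightarrow> bool" where
  "skew_vcat_str V A ho hm s \<longleftrightarrow> (case s of (M, j) \<Rightarrow>
    (\<forall>B C D. \<not> (B \<in> obj A \<and> C \<in> obj A \<and> D \<in> obj A) \<longrightarrow> M B C D = undefined) \<and>
    (\<forall>B. B \<notin> obj A \<longrightarrow> j B = undefined) \<and>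
    (\<forall>B \<in> obj A. \<forall>C \<in> obj A. \<forall>D \<in> obj A.
       M B C D \<in> hom V (tns V (ho C D) (ho B C)) (ho B D)) \<and>
    (\<forall>B \<in> obj A. j B \<in> hom V (unt V) (ho B B)) \<and>
    \<comment> \<open>naturality of M in the first variable\<close>
    (\<forall>u \<in> arr A. \<forall>C \<in> obj A. \<forall>D \<in> obj A.
       cmp V (M (src A u) C D) (tnsm V (ide V (ho C D)) (hm u (ide A C))) =
       cmp V (hm u (ide A D)) (M (tgt A u) C D)) \<and>
    \<comment> \<open>naturality of M in the last variable\<close>
    (\<forall>w \<in> arr A. \<forall>B \<in> obj A. \<forall>C \<in> obj A.
       cmp V (M B C (tgt A w)) (tnsm V (hm (ide A C) w) (ide V (ho B C))) =
       cmp V (hm (ide A B) w) (M B C (src A w))) \<and>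
    \<comment> \<open>(extra)naturality of M in the middle variable\<close>
    (\<forall>b \<in> arr A. \<forall>B \<in> obj A. \<forall>D \<in> obj A.
       cmp V (M B (tgt A b) D) (tnsm V (ide V (ho (tgt A b) D)) (hm (ide A B) b)) =
       cmp V (M B (src A b) D) (tnsm V (hm b (ide A D)) (ide V (ho B (src A b))))) \<and>
    \<comment> \<open>(extra)naturality of j\<close>
    (\<forall>a \<in> arr A. cmp V (hm (ide A (src A a)) a) (j (src A a)) =
                 cmp V (hm a (ide A (tgt A a))) (j (tgt A a))) \<and>
    \<comment> \<open>associativity and unit axioms\<close>
    (\<forall>B \<in> obj A. \<forall>C \<in> obj A. \<forall>D \<in> obj A. \<forall>E \<in> obj A.
       cmp V (M B D E) (cmp V (tnsm V (ide V (ho D E)) (M B C D)) (asc V (ho D E) (ho C D) (ho B C))) =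
       cmp V (M B C E) (tnsm V (M C D E) (ide V (ho B C)))) \<and>
    (\<forall>B \<in> obj A. \<forall>C \<in> obj A.
       cmp V (M B C C) (tnsm V (j C) (ide V (ho B C))) = lu V (ho B C)) \<and>
    (\<forall>B \<in> obj A. \<forall>C \<in> obj A.
       cmp V (M B B C) (cmp V (tnsm V (ide V (ho B C)) (j B)) (ru V (ho B C))) = ide V (ho B C)))"

definition normal_vcat_str ::
  "('o,'v,'z1) smcat_scheme \<Rightarrow> ('p,'q,'z2) cat_scheme \<Rightarrow> ('p \<Rightarrow> 'p \<Rightarrow> 'o) \<Rightarrow> ('q \<Rightarrow> 'q \<Rightarrow> 'v) \<Rightarrow>
   ('p \<Rightarrow> 'p \<Rightarrow> 'p \<Rightarrow> 'v) \<times> ('p \<Rightarrow> 'v) \<Rightarrow> bool" where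
  "normal_vcat_str V A ho hm s \<longleftrightarrow> skew_vcat_str V A ho hm s \<and> (case s of (M, j) \<Rightarrow>
    (\<forall>B \<in> obj A. \<forall>C \<in> obj A.
       bij_betw (\<lambda>f. cmp V (hm (ide A B) f) (j B)) (hom A B C) (hom V (unt V) (ho B C))))"

text \<open>Tensored V-category structure (V monoidal closed); \<phi> is the given isomorphism
  A(X * B, C) \<cong> V(X, A(B,C)), and \<eta>_{Y,B} = \<phi>(1_{Y*B}).  The morphism k adjunct to
  M \<circ> (1 \<otimes> \<eta>) is, for any choice ev : Q \<otimes> Y \<rightarrow> A(B,C) of internal hom Q = [Y, A(B,C)],
  the unique k with ev \<circ> (k \<otimes> 1) = M \<circ> (1 \<otimes> \<eta>).\<close>
definition tensored_vcat_str ::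
  "('o,'v,'z1) smcat_scheme \<Rightarrow> ('p,'q,'z2) cat_scheme \<Rightarrow>
   ('o \<Rightarrow> 'p \<Rightarrow> 'p) \<Rightarrow> ('p \<Rightarrow> 'p \<Rightarrow> 'o) \<Rightarrow> ('q \<Rightarrow> 'q \<Rightarrow> 'v) \<Rightarrow>
   ('o \<Rightarrow> 'p \<Rightarrow> 'p \<Rightarrow> 'q \<Rightarrow> 'v) \<Rightarrow>
   ('p \<Rightarrow> 'p \<Rightarrow> 'p \<Rightarrow> 'v) \<times> ('p \<Rightarrow> 'v) \<Rightarrow> bool" where
  "tensored_vcat_str V A ao ho hm \<phi> s \<longleftrightarrow> normal_vcat_str V A ho hm s \<and> (case s of (M, j) \<Rightarrow>
    (\<forall>Y \<in> obj V. \<forall>B \<in> obj A. \<forall>C \<in> obj A.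
       let \<eta> = \<phi> Y B (ao Y B) (ide A (ao Y B)) in
       \<forall>Q ev k. is_eval V Y (ho B C) Q ev \<longrightarrow> k \<in> hom V (ho (ao Y B) C) Q \<longrightarrow>
         cmp V ev (tnsm V k (ide V Y)) = cmp V (M B (ao Y B) C) (tnsm V (ide V (ho (ao Y B) C)) \<eta>)
         \<longrightarrow> iso_in V k))"

definition nat_hom_iso ::
  "('o,'v,'z1) smcat_scheme \<Rightarrow> ('p,'q,'z2) cat_scheme \<Rightarrow>
   ('o \<Rightarrow> 'p \<Rightarrow> 'p) \<Rightarrow> ('v \<Rightarrow> 'q \<Rightarrow> 'q) \<Rightarrow> ('p \<Rightarrow> 'p \<Rightarrow> 'o) \<Rightarrow> ('q \<Rightarrow> 'q \<Rightarrow> 'v) \<Rightarrow>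
   ('o \<Rightarrow> 'p \<Rightarrow> 'p \<Rightarrow> 'q \<Rightarrow> 'v) \<Rightarrow> bool" where
  "nat_hom_iso V A ao am ho hm \<phi> \<longleftrightarrow>
    (\<forall>X \<in> obj V. \<forall>B \<in> obj A. \<forall>C \<in> obj A.
       bij_betw (\<phi> X B C) (hom A (ao X B) C) (hom V X (ho B C))) \<and>
    (\<forall>x \<in> arr V. \<forall>u \<in> arr A. \<forall>c \<in> arr A. \<forall>f \<in> hom A (ao (tgt V x) (tgt A u)) (src A c).
       \<phi> (src V x) (src A u) (tgt A c) (cmp A c (cmp A f (am x u))) =
       cmp V (hm u c) (cmp V (\<phi> (tgt V x) (tgt A u) (src A c) f) x))"

end

theory Submission
  imports Defs
begin

text \<open>
  Write \<psi> for the inverse of the given bijection \<phi>, \<epsilon>_{B,C} = \<psi>(1) : A(B,C) * B \<rightarrow> C for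
  its counit and \<eta>_{Y,B} = \<phi>(1) : Y \<rightarrow> A(B, Y * B) for its unit.  An associator \<alpha> and a
  composition M determine each other: M_{B,C,D} is the transpose of \<epsilon> \<circ> (1 * \<epsilon>) \<circ> \<alpha>, and
  \<alpha>_{X,Y,B} is the inverse transpose of M \<circ> (\<eta> \<otimes> \<eta>).  Given the naturality available on
  either side, the two are related by the single equation
  \<psi>(M \<circ> (f \<otimes> g)) = \<psi>(f) \<circ> (1 * \<psi>(g)) \<circ> \<alpha>,
  and transporting along it turns every axiom of a skew actegory into the corresponding
  axiom of a skew V-category: naturality of \<alpha> into (extra)naturality of M, the pentagon into
  associativity of M, and, with j = \<phi>(l), naturality and the unit laws of l into those of j.

  For the second part, l_B is invertible iff precomposition with it is bijective on homs,
  which under \<phi> is exactly normality.  With internal homs available, invertibility of the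
  comparison k : A(Y * B, C) \<rightarrow> [Y, A(B,C)] for all C is equivalent to invertibility of
  \<alpha>_{X,Y,B} for all X, because under the adjunctions precomposition with \<alpha> corresponds
  to postcomposition with k.
\<close>

lemma is_catD:
  assumes "is_cat C"
  shows cat_src_obj: "f \<in> arr C \<Longrightarrow> src C f \<in> obj C"
    and cat_tgt_obj: "f \<in> arr C \<Longrightarrow> tgt C f \<in> obj C"
    and cat_ide_arr: "x \<in> obj C \<Longrightarrow> ide C x \<in> arr C"
    and cat_ide_src: "x \<in> obj C \<Longrightarrow> src C (ide C x) = x"
    and cat_ide_tgt: "x \<in> obj C \<Longrightarrow> tgt C (ide C x) = x"
    and cat_cmp_arr: "f \<in> arr C \<Longrightarrow> g \<in> arr C \<Longrightarrow> tgt C f = src C g \<Longrightarrow> cmp C g f \<in> arr C"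
    and cat_cmp_src: "f \<in> arr C \<Longrightarrow> g \<in> arr C \<Longrightarrow> tgt C f = src C g \<Longrightarrow> src C (cmp C g f) = src C f"
    and cat_cmp_tgt: "f \<in> arr C \<Longrightarrow> g \<in> arr C \<Longrightarrow> tgt C f = src C g \<Longrightarrow> tgt C (cmp C g f) = tgt C g"
    and cat_assoc: "f \<in> arr C \<Longrightarrow> g \<in> arr C \<Longrightarrow> h \<in> arr C \<Longrightarrow> tgt C f = src C g \<Longrightarrow> tgt C g = src C h \<Longrightarrow>
        cmp C (cmp C h g) f = cmp C h (cmp C g f)"
    and cat_idl: "f \<in> arr C \<Longrightarrow> tgt C f = y \<Longrightarrow> cmp C (ide C y) f = f"
    and cat_idr: "f \<in> arr C \<Longrightarrow> src C f = y \<Longrightarrow> cmp C f (ide C y) = f"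
  using assms unfolding is_cat_def hom_def by auto

lemma iso_inE:
  assumes "iso_in C f"
  obtains g where "g \<in> arr C" "src C g = tgt C f" "tgt C g = src C f"
    "cmp C g f = ide C (src C f)" "cmp C f g = ide C (tgt C f)"
  using assms unfolding iso_in_def hom_def by auto

lemma iso_in_cancel_left:
  assumes C: "is_cat C" and f: "iso_in C f" and a: "a \<in> arr C" "tgt C a = src C f"
    and b: "b \<in> arr C" "tgt C b = src C f" and e: "cmp C f a = cmp C f b"
  shows "a = b"
proof -
  obtain g where g: "g \<in> arr C" "src C g = tgt C f" "tgt C g = src C f"
    "cmp C g f = ide C (src C f)" "cmp C f g = ide C (tgt C f)" using iso_inE[OF f] by blast
  have fa: "f \<in> arr C" using f unfolding iso_in_def by auto
  have "a = cmp C (cmp C g f) a" using g a fa C by (simp add: cat_idl)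
  also have "\<dots> = cmp C g (cmp C f a)" using cat_assoc[OF C a(1) fa g(1)] g a by simp
  also have "\<dots> = cmp C g (cmp C f b)" using e by simp
  also have "\<dots> = cmp C (cmp C g f) b" using cat_assoc[OF C b(1) fa g(1)] g b by simp
  also have "\<dots> = b" using g b fa C by (simp add: cat_idl)
  finally show ?thesis .
qed

lemma iso_in_cancel_right:
  assumes C: "is_cat C" and f: "iso_in C f" and a: "a \<in> arr C" "src C a = tgt C f"
    and b: "b \<in> arr C" "src C b = tgt C f" and e: "cmp C a f = cmp C b f"
  shows "a = b"
proof -
  obtain g where g: "g \<in> arr C" "src C g = tgt C f" "tgt C g = src C f"
    "cmp C g f = ide C (src C f)" "cmp C f g = ide C (tgt C f)" using iso_inE[OF f] by blast
  have fa: "f \<in> arr C" using f unfolding iso_in_def by auto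
  have "a = cmp C a (cmp C f g)" using g a fa C by (simp add: cat_idr)
  also have "\<dots> = cmp C (cmp C a f) g" using cat_assoc[OF C g(1) fa a(1)] g a by simp
  also have "\<dots> = cmp C (cmp C b f) g" using e by simp
  also have "\<dots> = cmp C b (cmp C f g)" using cat_assoc[OF C g(1) fa b(1)] g b by simp
  also have "\<dots> = b" using g b fa C by (simp add: cat_idr)
  finally show ?thesis .
qed

lemma precomp_bij_iff_iso_in:
  assumes C: "is_cat C" and l: "l \<in> arr C"
  shows "(\<forall>D \<in> obj C. bij_betw (\<lambda>f. cmp C f l) (hom C (tgt C l) D) (hom C (src C l) D)) \<longleftrightarrow> iso_in C l"
proof
  assume H: "\<forall>D \<in> obj C. bij_betw (\<lambda>f. cmp C f l) (hom C (tgt C l) D) (hom C (src C l) D)"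
  have so: "src C l \<in> obj C" "tgt C l \<in> obj C" using C l by (auto simp: cat_src_obj cat_tgt_obj)
  have "ide C (src C l) \<in> hom C (src C l) (src C l)" using C so by (simp add: hom_def cat_ide_arr cat_ide_src cat_ide_tgt)
  then obtain g where g: "g \<in> hom C (tgt C l) (src C l)" "cmp C g l = ide C (src C l)"
    using H so unfolding bij_betw_def by (metis (no_types, lifting) imageE)
  have g': "g \<in> arr C" "src C g = tgt C l" "tgt C g = src C l" using g unfolding hom_def by auto
  have i1: "cmp C l g \<in> hom C (tgt C l) (tgt C l)" using g' C l by (simp add: hom_def cat_cmp_arr cat_cmp_src cat_cmp_tgt)
  have i2: "ide C (tgt C l) \<in> hom C (tgt C l) (tgt C l)" using C so by (simp add: hom_def cat_ide_arr cat_ide_src cat_ide_tgt)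
  have "cmp C (cmp C l g) l = cmp C (ide C (tgt C l)) l"
    using g' g(2) C l by (simp add: cat_assoc cat_idl cat_idr)
  then have "cmp C l g = ide C (tgt C l)"
    using H so i1 i2 unfolding bij_betw_def inj_on_def by blast
  then show "iso_in C l" unfolding iso_in_def using l g by blast
next
  assume I: "iso_in C l"
  obtain g where g: "g \<in> arr C" "src C g = tgt C l" "tgt C g = src C l"
    "cmp C g l = ide C (src C l)" "cmp C l g = ide C (tgt C l)" using iso_inE[OF I] by blast
  show "\<forall>D \<in> obj C. bij_betw (\<lambda>f. cmp C f l) (hom C (tgt C l) D) (hom C (src C l) D)"
  proof
    fix D assume D: "D \<in> obj C"
    show "bij_betw (\<lambda>f. cmp C f l) (hom C (tgt C l) D) (hom C (src C l) D)"
    proof (rule bij_betw_byWitness[where f' = "\<lambda>h. cmp C h g"])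
      show "\<forall>a\<in>hom C (tgt C l) D. cmp C (cmp C a l) g = a"
        using g l C by (auto simp: hom_def cat_assoc cat_idr)
      show "\<forall>a\<in>hom C (src C l) D. cmp C (cmp C a g) l = a"
        using g l C by (auto simp: hom_def cat_assoc cat_idr)
      show "(\<lambda>f. cmp C f l) ` hom C (tgt C l) D \<subseteq> hom C (src C l) D"
        using g l C by (auto simp: hom_def cat_cmp_arr cat_cmp_src cat_cmp_tgt)
      show "(\<lambda>h. cmp C h g) ` hom C (src C l) D \<subseteq> hom C (tgt C l) D"
        using g l C by (auto simp: hom_def cat_cmp_arr cat_cmp_src cat_cmp_tgt)
    qed
  qed
qed

section \<open>Transposition along \<phi>\<close>

locale hom_action_adjunction =
  fixes V :: "('o,'v) smcat" and A :: "('p,'q) cat"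
    and ao :: "'o \<Rightarrow> 'p \<Rightarrow> 'p" and am :: "'v \<Rightarrow> 'q \<Rightarrow> 'q"
    and ho :: "'p \<Rightarrow> 'p \<Rightarrow> 'o" and hm :: "'q \<Rightarrow> 'q \<Rightarrow> 'v"
    and \<phi> :: "'o \<Rightarrow> 'p \<Rightarrow> 'p \<Rightarrow> 'q \<Rightarrow> 'v"
  assumes V_skew_monoidal: "skew_monoidal V"
    and A_is_cat: "is_cat A"
    and action_is_bifunctor: "bifunctor V A A ao am"
    and hom_is_homfunctor: "homfunctor A V ho hm"
    and phi_nat_iso: "nat_hom_iso V A ao am ho hm \<phi>"
begin

abbreviation cA (infixr "\<cdot>" 55) where "g \<cdot> f \<equiv> cmp A g f"
abbreviation cV (infixr "\<bullet>" 55) where "g \<bullet> f \<equiv> cmp V g f"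
abbreviation amm (infixr "\<star>" 60) where "x \<star> u \<equiv> am x u"
abbreviation tm (infixr "\<otimes>" 60) where "x \<otimes> y \<equiv> tnsm V x y"
abbreviation iA where "iA B \<equiv> ide A B"
abbreviation iV where "iV X \<equiv> ide V X"
abbreviation II where "II \<equiv> unt V"

lemma V_is_cat: "is_cat V" using V_skew_monoidal unfolding skew_monoidal_def by auto

lemmas A_simps =
  cat_src_obj[OF A_is_cat] cat_tgt_obj[OF A_is_cat] cat_ide_arr[OF A_is_cat]
  cat_ide_src[OF A_is_cat] cat_ide_tgt[OF A_is_cat] cat_cmp_arr[OF A_is_cat]
  cat_cmp_src[OF A_is_cat] cat_cmp_tgt[OF A_is_cat] cat_assoc[OF A_is_cat]
  cat_idl[OF A_is_cat] cat_idr[OF A_is_cat]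

lemmas V_simps =
  cat_src_obj[OF V_is_cat] cat_tgt_obj[OF V_is_cat] cat_ide_arr[OF V_is_cat]
  cat_ide_src[OF V_is_cat] cat_ide_tgt[OF V_is_cat] cat_cmp_arr[OF V_is_cat]
  cat_cmp_src[OF V_is_cat] cat_cmp_tgt[OF V_is_cat] cat_assoc[OF V_is_cat]
  cat_idl[OF V_is_cat] cat_idr[OF V_is_cat]

lemma action_bifunctor:
  shows ao_obj: "X \<in> obj V \<Longrightarrow> B \<in> obj A \<Longrightarrow> ao X B \<in> obj A"
    and am_arr: "x \<in> arr V \<Longrightarrow> u \<in> arr A \<Longrightarrow> x \<star> u \<in> arr A"
    and am_src: "x \<in> arr V \<Longrightarrow> u \<in> arr A \<Longrightarrow> src A (x \<star> u) = ao (src V x) (src A u)"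
    and am_tgt: "x \<in> arr V \<Longrightarrow> u \<in> arr A \<Longrightarrow> tgt A (x \<star> u) = ao (tgt V x) (tgt A u)"
    and am_ide: "X \<in> obj V \<Longrightarrow> B \<in> obj A \<Longrightarrow> iV X \<star> iA B = iA (ao X B)"
    and am_cmp: "x \<in> arr V \<Longrightarrow> x' \<in> arr V \<Longrightarrow> u \<in> arr A \<Longrightarrow> u' \<in> arr A \<Longrightarrow>
        tgt V x = src V x' \<Longrightarrow> tgt A u = src A u' \<Longrightarrow> (x' \<bullet> x) \<star> (u' \<cdot> u) = (x' \<star> u') \<cdot> (x \<star> u)"
  using action_is_bifunctor unfolding bifunctor_def hom_def by auto

lemma tensor_bifunctor:
  shows tns_obj: "X \<in> obj V \<Longrightarrow> Y \<in> obj V \<Longrightarrow> tns V X Y \<in> obj V"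
    and tm_arr: "x \<in> arr V \<Longrightarrow> y \<in> arr V \<Longrightarrow> x \<otimes> y \<in> arr V"
    and tm_src: "x \<in> arr V \<Longrightarrow> y \<in> arr V \<Longrightarrow> src V (x \<otimes> y) = tns V (src V x) (src V y)"
    and tm_tgt: "x \<in> arr V \<Longrightarrow> y \<in> arr V \<Longrightarrow> tgt V (x \<otimes> y) = tns V (tgt V x) (tgt V y)"
    and tm_ide: "X \<in> obj V \<Longrightarrow> Y \<in> obj V \<Longrightarrow> iV X \<otimes> iV Y = iV (tns V X Y)"
    and tm_cmp: "x \<in> arr V \<Longrightarrow> x' \<in> arr V \<Longrightarrow> y \<in> arr V \<Longrightarrow> y' \<in> arr V \<Longrightarrow>
        tgt V x = src V x' \<Longrightarrow> tgt V y = src V y' \<Longrightarrow> (x' \<bullet> x) \<otimes> (y' \<bullet> y) = (x' \<otimes> y') \<bullet> (x \<otimes> y)"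
  using V_skew_monoidal unfolding skew_monoidal_def bifunctor_def hom_def by auto

lemma hom_functor:
  shows ho_obj: "B \<in> obj A \<Longrightarrow> C \<in> obj A \<Longrightarrow> ho B C \<in> obj V"
    and hm_arr: "u \<in> arr A \<Longrightarrow> c \<in> arr A \<Longrightarrow> hm u c \<in> arr V"
    and hm_src: "u \<in> arr A \<Longrightarrow> c \<in> arr A \<Longrightarrow> src V (hm u c) = ho (tgt A u) (src A c)"
    and hm_tgt: "u \<in> arr A \<Longrightarrow> c \<in> arr A \<Longrightarrow> tgt V (hm u c) = ho (src A u) (tgt A c)"
    and hm_ide: "B \<in> obj A \<Longrightarrow> C \<in> obj A \<Longrightarrow> hm (iA B) (iA C) = iV (ho B C)"
    and hm_cmp: "u \<in> arr A \<Longrightarrow> u' \<in> arr A \<Longrightarrow> c \<in> arr A \<Longrightarrow> c' \<in> arr A \<Longrightarrow>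
        tgt A u = src A u' \<Longrightarrow> tgt A c = src A c' \<Longrightarrow> hm (u' \<cdot> u) (c' \<cdot> c) = hm u c' \<bullet> hm u' c"
  using hom_is_homfunctor unfolding homfunctor_def hom_def by auto

lemma skew_monoidal_facts:
  shows unt_obj: "II \<in> obj V"
    and asc_arr: "X \<in> obj V \<Longrightarrow> Y \<in> obj V \<Longrightarrow> Z \<in> obj V \<Longrightarrow> asc V X Y Z \<in> arr V"
    and asc_src: "X \<in> obj V \<Longrightarrow> Y \<in> obj V \<Longrightarrow> Z \<in> obj V \<Longrightarrow> src V (asc V X Y Z) = tns V (tns V X Y) Z"
    and asc_tgt: "X \<in> obj V \<Longrightarrow> Y \<in> obj V \<Longrightarrow> Z \<in> obj V \<Longrightarrow> tgt V (asc V X Y Z) = tns V X (tns V Y Z)"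
    and lu_arr: "X \<in> obj V \<Longrightarrow> lu V X \<in> arr V"
    and lu_src: "X \<in> obj V \<Longrightarrow> src V (lu V X) = tns V II X"
    and lu_tgt: "X \<in> obj V \<Longrightarrow> tgt V (lu V X) = X"
    and ru_arr: "X \<in> obj V \<Longrightarrow> ru V X \<in> arr V"
    and ru_src: "X \<in> obj V \<Longrightarrow> src V (ru V X) = X"
    and ru_tgt: "X \<in> obj V \<Longrightarrow> tgt V (ru V X) = tns V X II"
    and asc_nat: "f \<in> arr V \<Longrightarrow> g \<in> arr V \<Longrightarrow> h \<in> arr V \<Longrightarrow>
       asc V (tgt V f) (tgt V g) (tgt V h) \<bullet> ((f \<otimes> g) \<otimes> h) =
       (f \<otimes> (g \<otimes> h)) \<bullet> asc V (src V f) (src V g) (src V h)"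
    and lu_nat: "f \<in> arr V \<Longrightarrow> lu V (tgt V f) \<bullet> (iV II \<otimes> f) = f \<bullet> lu V (src V f)"
    and ru_nat: "f \<in> arr V \<Longrightarrow> ru V (tgt V f) \<bullet> f = (f \<otimes> iV II) \<bullet> ru V (src V f)"
  using V_skew_monoidal unfolding skew_monoidal_def hom_def by auto

lemma phi_facts:
  shows phi_bij: "X \<in> obj V \<Longrightarrow> B \<in> obj A \<Longrightarrow> C \<in> obj A \<Longrightarrow>
       bij_betw (\<phi> X B C) (hom A (ao X B) C) (hom V X (ho B C))"
    and phi_nat: "x \<in> arr V \<Longrightarrow> u \<in> arr A \<Longrightarrow> c \<in> arr A \<Longrightarrow> f \<in> hom A (ao (tgt V x) (tgt A u)) (src A c) \<Longrightarrow>
       \<phi> (src V x) (src A u) (tgt A c) (c \<cdot> f \<cdot> (x \<star> u)) =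
       hm u c \<bullet> \<phi> (tgt V x) (tgt A u) (src A c) f \<bullet> x"
  using phi_nat_iso unfolding nat_hom_iso_def by auto

lemmas typing_base = A_simps V_simps ao_obj am_arr am_src am_tgt tns_obj tm_arr tm_src tm_tgt
  ho_obj hm_arr hm_src hm_tgt unt_obj asc_arr asc_src asc_tgt lu_arr lu_src lu_tgt
  ru_arr ru_src ru_tgt

definition psi where "psi X B C h = the_inv_into (hom A (ao X B) C) (\<phi> X B C) h"

lemma phi_typing_tgt:
  assumes "X \<in> obj V" "B \<in> obj A" "f \<in> arr A" "src A f = ao X B"
  shows phi_arr: "\<phi> X B (tgt A f) f \<in> arr V"
    and phi_src: "src V (\<phi> X B (tgt A f) f) = X"
    and phi_tgt: "tgt V (\<phi> X B (tgt A f) f) = ho B (tgt A f)"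
proof -
  have "\<phi> X B (tgt A f) f \<in> hom V X (ho B (tgt A f))"
    using phi_bij[OF assms(1,2) cat_tgt_obj[OF A_is_cat assms(3)]] assms unfolding bij_betw_def hom_def
    by auto
  then show "\<phi> X B (tgt A f) f \<in> arr V" "src V (\<phi> X B (tgt A f) f) = X"
    "tgt V (\<phi> X B (tgt A f) f) = ho B (tgt A f)" unfolding hom_def by auto
qed

lemma psi_typing_src:
  assumes "B \<in> obj A" "C \<in> obj A" "h \<in> arr V" "tgt V h = ho B C"
  shows psi_arr: "psi (src V h) B C h \<in> arr A"
    and psi_src: "src A (psi (src V h) B C h) = ao (src V h) B"
    and psi_tgt: "tgt A (psi (src V h) B C h) = C"
    and phi_psi: "\<phi> (src V h) B C (psi (src V h) B C h) = h"
proof -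
  have X: "src V h \<in> obj V" using assms(3) by (simp add: typing_base)
  have b: "bij_betw (\<phi> (src V h) B C) (hom A (ao (src V h) B) C) (hom V (src V h) (ho B C))"
    using phi_bij[OF X assms(1,2)] .
  have hh: "h \<in> hom V (src V h) (ho B C)" using assms unfolding hom_def by auto
  have "psi (src V h) B C h \<in> hom A (ao (src V h) B) C"
    unfolding psi_def using b hh by (simp add: bij_betw_def the_inv_into_into)
  then show "psi (src V h) B C h \<in> arr A" "src A (psi (src V h) B C h) = ao (src V h) B"
    "tgt A (psi (src V h) B C h) = C" unfolding hom_def by auto
  show "\<phi> (src V h) B C (psi (src V h) B C h) = h"
    unfolding psi_def using b hh by (simp add: bij_betw_def f_the_inv_into_f)
qed

lemma psi_phi:
  assumes "X \<in> obj V" "B \<in> obj A" "f \<in> arr A" "src A f = ao X B" "tgt A f = C"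
  shows "psi X B C (\<phi> X B C f) = f"
proof -
  have C: "C \<in> obj A" using assms by (auto simp: typing_base)
  have b: "bij_betw (\<phi> X B C) (hom A (ao X B) C) (hom V X (ho B C))"
    using phi_bij[OF assms(1,2) C] .
  show ?thesis unfolding psi_def using b assms
    by (simp add: bij_betw_def the_inv_into_f_f hom_def)
qed

lemma psi_inj:
  assumes "B \<in> obj A" "C \<in> obj A" "h \<in> arr V" "tgt V h = ho B C" "h' \<in> arr V" "tgt V h' = ho B C"
    "src V h = X" "src V h' = X" "psi X B C h = psi X B C h'"
  shows "h = h'"
  using phi_psi[OF assms(1-4)] phi_psi[OF assms(1,2,5,6)] assms(7-9) by metis

lemma psi_typing:
  assumes "B \<in> obj A" "C \<in> obj A" "h \<in> arr V" "src V h = X" "tgt V h = ho B C"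
  shows psi_arr': "psi X B C h \<in> arr A"
    and psi_src': "src A (psi X B C h) = ao X B"
    and psi_tgt': "tgt A (psi X B C h) = C"
    and phi_psi': "\<phi> X B C (psi X B C h) = h"
  using psi_typing_src[OF assms(1,2,3,5)] assms(4) by auto

lemma phi_typing:
  assumes "X \<in> obj V" "B \<in> obj A" "f \<in> arr A" "src A f = ao X B" "tgt A f = C"
  shows phi_arr': "\<phi> X B C f \<in> arr V"
    and phi_src': "src V (\<phi> X B C f) = X"
    and phi_tgt': "tgt V (\<phi> X B C f) = ho B C"
  using phi_typing_tgt[OF assms(1-4)] assms(5) by auto

lemmas typing_transpose = typing_base psi_arr' psi_src' psi_tgt' phi_arr' phi_src' phi_tgt'

lemma psi_nat:
  assumes x: "x \<in> arr V" and u: "u \<in> arr A" and c: "c \<in> arr A" and h: "h \<in> arr V"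
    and hs: "src V h = tgt V x" and ht: "tgt V h = ho (tgt A u) (src A c)"
  shows "psi (src V x) (src A u) (tgt A c) (hm u c \<bullet> h \<bullet> x) =
         c \<cdot> psi (tgt V x) (tgt A u) (src A c) h \<cdot> (x \<star> u)"
proof -
  let ?f = "psi (tgt V x) (tgt A u) (src A c) h"
  have o: "tgt A u \<in> obj A" "src A c \<in> obj A" "src V x \<in> obj V" "src A u \<in> obj A" "tgt V x \<in> obj V"
    using x u c by (auto simp: typing_base)
  have fa: "?f \<in> arr A" "src A ?f = ao (tgt V x) (tgt A u)" "tgt A ?f = src A c"
    using psi_typing[OF o(1,2) h hs ht] by auto
  have fh: "?f \<in> hom A (ao (tgt V x) (tgt A u)) (src A c)" using fa unfolding hom_def by auto
  have e: "\<phi> (src V x) (src A u) (tgt A c) (c \<cdot> ?f \<cdot> (x \<star> u)) = hm u c \<bullet> h \<bullet> x"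
    using phi_nat[OF x u c fh] psi_typing[OF o(1,2) h hs ht] by simp
  have "psi (src V x) (src A u) (tgt A c) (\<phi> (src V x) (src A u) (tgt A c) (c \<cdot> ?f \<cdot> (x \<star> u)))
        = c \<cdot> ?f \<cdot> (x \<star> u)"
    by (rule psi_phi) (use o x u c fa in \<open>auto simp: typing_base\<close>)
  then show ?thesis using e by simp
qed

lemma psi_precomp:
  assumes "x \<in> arr V" "h \<in> arr V" "tgt V x = src V h" "tgt V h = ho B C" "B \<in> obj A" "C \<in> obj A"
  shows "psi (src V x) B C (h \<bullet> x) = psi (tgt V x) B C h \<cdot> (x \<star> iA B)"
  using psi_nat[of x "iA B" "iA C" h] assms by (simp add: typing_transpose hm_ide)

lemma psi_postcomp:
  assumes "c \<in> arr A" "h \<in> arr V" "src V h = X" "tgt V h = ho B (src A c)" "B \<in> obj A"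
  shows "psi X B (tgt A c) (hm (iA B) c \<bullet> h) = c \<cdot> psi X B (src A c) h"
proof -
  have X: "X \<in> obj V" using assms by (auto simp: typing_base)
  show ?thesis
    using psi_nat[of "iV X" "iA B" c h] assms X by (simp add: typing_transpose am_ide)
qed

lemma psi_hom_contra:
  assumes "u \<in> arr A" "h \<in> arr V" "src V h = X" "tgt V h = ho (tgt A u) C" "C \<in> obj A"
  shows "psi X (src A u) C (hm u (iA C) \<bullet> h) = psi X (tgt A u) C h \<cdot> (iV X \<star> u)"
proof -
  have X: "X \<in> obj V" using assms by (auto simp: typing_base)
  show ?thesis
    using psi_nat[of "iV X" u "iA C" h] assms X by (simp add: typing_transpose)
qed

definition eps where "eps B C = psi (ho B C) B C (iV (ho B C))"
definition eta where "eta Y B = \<phi> Y B (ao Y B) (iA (ao Y B))"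

lemma eps_typing:
  assumes "B \<in> obj A" "C \<in> obj A"
  shows eps_arr: "eps B C \<in> arr A" and eps_src: "src A (eps B C) = ao (ho B C) B"
    and eps_tgt: "tgt A (eps B C) = C"
  unfolding eps_def using assms by (auto simp: typing_transpose)

lemma eta_typing:
  assumes "Y \<in> obj V" "B \<in> obj A"
  shows eta_arr: "eta Y B \<in> arr V" and eta_src: "src V (eta Y B) = Y"
    and eta_tgt: "tgt V (eta Y B) = ho B (ao Y B)"
  unfolding eta_def using assms by (auto simp: typing_transpose)

lemmas typing = typing_transpose eps_arr eps_src eps_tgt eta_arr eta_src eta_tgt

lemma psi_eq_eps:
  assumes "h \<in> arr V" "src V h = X" "tgt V h = ho B C" "B \<in> obj A" "C \<in> obj A"
  shows "psi X B C h = eps B C \<cdot> (h \<star> iA B)"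
proof -
  have "psi (src V h) B C (iV (ho B C) \<bullet> h) = psi (tgt V h) B C (iV (ho B C)) \<cdot> (h \<star> iA B)"
    by (rule psi_precomp) (use assms in \<open>auto simp: typing_base\<close>)
  then show ?thesis using assms by (simp add: typing_base eps_def)
qed

lemma psi_eta: "Y \<in> obj V \<Longrightarrow> B \<in> obj A \<Longrightarrow> psi Y B (ao Y B) (eta Y B) = iA (ao Y B)"
  unfolding eta_def by (rule psi_phi) (auto simp: typing_base)

lemma phi_eq_eta:
  assumes "X \<in> obj V" "B \<in> obj A" "f \<in> arr A" "src A f = ao X B"
  shows "\<phi> X B (tgt A f) f = hm (iA B) f \<bullet> eta X B"
proof -
  have "psi X B (tgt A f) (hm (iA B) f \<bullet> eta X B) = f \<cdot> psi X B (src A f) (eta X B)"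
    by (rule psi_postcomp) (use assms in \<open>auto simp: typing\<close>)
  also have "\<dots> = f" using assms by (simp add: psi_eta typing_base)
  finally have "psi X B (tgt A f) (hm (iA B) f \<bullet> eta X B) = f" .
  then have "\<phi> X B (tgt A f) (psi X B (tgt A f) (hm (iA B) f \<bullet> eta X B)) = \<phi> X B (tgt A f) f" by simp
  moreover have "\<phi> X B (tgt A f) (psi X B (tgt A f) (hm (iA B) f \<bullet> eta X B)) = hm (iA B) f \<bullet> eta X B"
    by (rule phi_psi') (use assms in \<open>auto simp: typing\<close>)
  ultimately show ?thesis by simp
qed

lemma psi_eqI:
  assumes "B \<in> obj A" "C \<in> obj A" "h \<in> arr V" "src V h = X" "tgt V h = ho B C"
    "h' \<in> arr V" "src V h' = X" "tgt V h' = ho B C" "psi X B C h = psi X B C h'"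
  shows "h = h'"
  using psi_inj[of B C h h' X] assms by auto

lemma am_merge:
  "x \<in> arr V \<Longrightarrow> x' \<in> arr V \<Longrightarrow> u \<in> arr A \<Longrightarrow> u' \<in> arr A \<Longrightarrow>
   tgt V x = src V x' \<Longrightarrow> tgt A u = src A u' \<Longrightarrow> (x' \<star> u') \<cdot> (x \<star> u) = (x' \<bullet> x) \<star> (u' \<cdot> u)"
  by (simp add: am_cmp)

lemma am_merge2:
  "x \<in> arr V \<Longrightarrow> x' \<in> arr V \<Longrightarrow> u \<in> arr A \<Longrightarrow> u' \<in> arr A \<Longrightarrow> h \<in> arr A \<Longrightarrow>
   tgt V x = src V x' \<Longrightarrow> tgt A u = src A u' \<Longrightarrow> tgt A h = ao (src V x) (src A u) \<Longrightarrow>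
   (x' \<star> u') \<cdot> (x \<star> u) \<cdot> h = ((x' \<bullet> x) \<star> (u' \<cdot> u)) \<cdot> h"
  by (simp add: am_cmp typing_base)

lemma tm_merge:
  "x \<in> arr V \<Longrightarrow> x' \<in> arr V \<Longrightarrow> u \<in> arr V \<Longrightarrow> u' \<in> arr V \<Longrightarrow>
   tgt V x = src V x' \<Longrightarrow> tgt V u = src V u' \<Longrightarrow> (x' \<otimes> u') \<bullet> (x \<otimes> u) = (x' \<bullet> x) \<otimes> (u' \<bullet> u)"
  by (simp add: tm_cmp)

lemma tm_merge2:
  "x \<in> arr V \<Longrightarrow> x' \<in> arr V \<Longrightarrow> u \<in> arr V \<Longrightarrow> u' \<in> arr V \<Longrightarrow> h \<in> arr V \<Longrightarrow>
   tgt V x = src V x' \<Longrightarrow> tgt V u = src V u' \<Longrightarrow> tgt V h = tns V (src V x) (src V u) \<Longrightarrow>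
   (x' \<otimes> u') \<bullet> (x \<otimes> u) \<bullet> h = ((x' \<bullet> x) \<otimes> (u' \<bullet> u)) \<bullet> h"
  by (simp add: tm_cmp typing_base)

lemmas merge = am_merge am_merge2 tm_merge tm_merge2

text \<open>Composites are right-nested, so an equation between composites only applies under a
  further precomposition after reassociation.\<close>

lemma V_precomp2:
  assumes "a \<bullet> b = c \<bullet> d" "a \<in> arr V" "b \<in> arr V" "c \<in> arr V" "d \<in> arr V" "h \<in> arr V"
    "tgt V b = src V a" "tgt V d = src V c" "tgt V h = src V b" "tgt V h = src V d"
  shows "a \<bullet> b \<bullet> h = c \<bullet> d \<bullet> h"
  using assms by (metis cat_assoc[OF V_is_cat])

lemma A_precomp2:
  assumes "a \<cdot> b = c \<cdot> d" "a \<in> arr A" "b \<in> arr A" "c \<in> arr A" "d \<in> arr A" "h \<in> arr A"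
    "tgt A b = src A a" "tgt A d = src A c" "tgt A h = src A b" "tgt A h = src A d"
  shows "a \<cdot> b \<cdot> h = c \<cdot> d \<cdot> h"
  using assms by (metis cat_assoc[OF A_is_cat])

lemma V_precomp1:
  assumes "a \<bullet> b = c" "a \<in> arr V" "b \<in> arr V" "h \<in> arr V"
    "tgt V b = src V a" "tgt V h = src V b"
  shows "a \<bullet> b \<bullet> h = c \<bullet> h"
  using assms by (metis cat_assoc[OF V_is_cat])

lemma V_precomp3:
  assumes "a \<bullet> b \<bullet> c = e" "a \<in> arr V" "b \<in> arr V" "c \<in> arr V" "h \<in> arr V"
    "tgt V b = src V a" "tgt V c = src V b" "tgt V h = src V c"
  shows "a \<bullet> b \<bullet> c \<bullet> h = e \<bullet> h"
  using assms by (metis cat_cmp_arr[OF V_is_cat] cat_cmp_src[OF V_is_cat] cat_cmp_tgt[OF V_is_cat] cat_assoc[OF V_is_cat])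

lemma V_precomp32:
  assumes "a \<bullet> b \<bullet> c = d \<bullet> e" "a \<in> arr V" "b \<in> arr V" "c \<in> arr V" "d \<in> arr V" "e \<in> arr V" "h \<in> arr V"
    "tgt V b = src V a" "tgt V c = src V b" "tgt V e = src V d" "tgt V h = src V c" "tgt V h = src V e"
  shows "d \<bullet> e \<bullet> h = a \<bullet> b \<bullet> c \<bullet> h"
  using assms by (metis cat_cmp_arr[OF V_is_cat] cat_cmp_src[OF V_is_cat] cat_cmp_tgt[OF V_is_cat] cat_assoc[OF V_is_cat])

lemma phi_precomp_action:
  assumes "X \<in> obj V" "p \<in> arr A" "f \<in> arr A" "src A f = ao X (tgt A p)"
  shows "\<phi> X (src A p) (tgt A f) (f \<cdot> (iV X \<star> p)) = hm p (iA (tgt A f)) \<bullet> \<phi> X (tgt A p) (tgt A f) f"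
proof -
  have "\<phi> (src V (iV X)) (src A p) (tgt A (iA (tgt A f))) (iA (tgt A f) \<cdot> f \<cdot> (iV X \<star> p)) =
      hm p (iA (tgt A f)) \<bullet> \<phi> (tgt V (iV X)) (tgt A p) (src A (iA (tgt A f))) f \<bullet> iV X"
    by (rule phi_nat) (use assms in \<open>auto simp: typing_base hom_def\<close>)
  then show ?thesis using assms by (simp add: typing)
qed

lemma psi_hm:
  assumes "u \<in> arr A" "c \<in> arr A"
  shows "psi (ho (tgt A u) (src A c)) (src A u) (tgt A c) (hm u c) =
     c \<cdot> eps (tgt A u) (src A c) \<cdot> (iV (ho (tgt A u) (src A c)) \<star> u)"
  using psi_nat[of "iV (ho (tgt A u) (src A c))" u c "iV (ho (tgt A u) (src A c))"] assms
  by (simp add: typing eps_def)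

lemma psi_hm_cov:
  assumes "b \<in> arr A" "B \<in> obj A"
  shows "psi (ho B (src A b)) B (tgt A b) (hm (iA B) b) = b \<cdot> eps B (src A b)"
  using psi_hm[of "iA B" b] assms by (simp add: typing am_ide)

lemma psi_hm_contra:
  assumes "u \<in> arr A" "D \<in> obj A"
  shows "psi (ho (tgt A u) D) (src A u) D (hm u (iA D)) = eps (tgt A u) D \<cdot> (iV (ho (tgt A u) D) \<star> u)"
  using psi_hm[of u "iA D"] assms by (simp add: typing)

lemma psi_eta_precomp:
  assumes "x \<in> arr V" "B \<in> obj A"
  shows "psi (src V x) B (ao (tgt V x) B) (eta (tgt V x) B \<bullet> x) = x \<star> iA B"
  using psi_precomp[of x "eta (tgt V x) B" B "ao (tgt V x) B"] assms by (simp add: typing psi_eta)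

section \<open>Associators versus compositions\<close>

definition comp_of_assoc where
  "comp_of_assoc \<alpha> B C D = (if B \<in> obj A \<and> C \<in> obj A \<and> D \<in> obj A
     then \<phi> (tns V (ho C D) (ho B C)) B D (eps C D \<cdot> (iV (ho C D) \<star> eps B C) \<cdot> \<alpha> (ho C D) (ho B C) B)
     else undefined)"

definition unit_of_lunit where
  "unit_of_lunit lm B = (if B \<in> obj A then \<phi> II B B (lm B) else undefined)"

definition assoc_of_comp where
  "assoc_of_comp M X Y B = (if X \<in> obj V \<and> Y \<in> obj V \<and> B \<in> obj A
     then psi (tns V X Y) B (ao X (ao Y B)) (M B (ao Y B) (ao X (ao Y B)) \<bullet> (eta X (ao Y B) \<otimes> eta Y B))
     else undefined)"

definition lunit_of_unit where
  "lunit_of_unit j B = (if B \<in> obj A then psi II B B (j B) else undefined)"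

definition assoc_typed where
  "assoc_typed \<alpha> \<longleftrightarrow> (\<forall>X Y B. X \<in> obj V \<longrightarrow> Y \<in> obj V \<longrightarrow> B \<in> obj A \<longrightarrow>
     \<alpha> X Y B \<in> arr A \<and> src A (\<alpha> X Y B) = ao (tns V X Y) B \<and> tgt A (\<alpha> X Y B) = ao X (ao Y B))"

definition comp_typed where
  "comp_typed M \<longleftrightarrow> (\<forall>B C D. B \<in> obj A \<longrightarrow> C \<in> obj A \<longrightarrow> D \<in> obj A \<longrightarrow>
     M B C D \<in> arr V \<and> src V (M B C D) = tns V (ho C D) (ho B C) \<and> tgt V (M B C D) = ho B D)"

definition lunit_typed where
  "lunit_typed lm \<longleftrightarrow> (\<forall>B \<in> obj A. lm B \<in> arr A \<and> src A (lm B) = ao II B \<and> tgt A (lm B) = B)"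

definition unit_typed where
  "unit_typed j \<longleftrightarrow> (\<forall>B \<in> obj A. j B \<in> arr V \<and> src V (j B) = II \<and> tgt V (j B) = ho B B)"

definition corresp where
  "corresp \<alpha> M \<longleftrightarrow> (\<forall>X Y B C D f g. X \<in> obj V \<longrightarrow> Y \<in> obj V \<longrightarrow> B \<in> obj A \<longrightarrow>
     C \<in> obj A \<longrightarrow> D \<in> obj A \<longrightarrow> f \<in> arr V \<longrightarrow> src V f = X \<longrightarrow> tgt V f = ho C D \<longrightarrow>
     g \<in> arr V \<longrightarrow> src V g = Y \<longrightarrow> tgt V g = ho B C \<longrightarrow>
     psi (tns V X Y) B D (M B C D \<bullet> (f \<otimes> g)) = psi X C D f \<cdot> (iV X \<star> psi Y B C g) \<cdot> \<alpha> X Y B)"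

definition lunit_corresp where
  "lunit_corresp lm j \<longleftrightarrow> (\<forall>B \<in> obj A.
     lm B \<in> arr A \<and> src A (lm B) = ao II B \<and> tgt A (lm B) = B \<and> j B = \<phi> II B B (lm B))"

definition assoc_natural_V where
  "assoc_natural_V \<alpha> \<longleftrightarrow> (\<forall>x y B. x \<in> arr V \<longrightarrow> y \<in> arr V \<longrightarrow> B \<in> obj A \<longrightarrow>
     \<alpha> (tgt V x) (tgt V y) B \<cdot> ((x \<otimes> y) \<star> iA B) = (x \<star> (y \<star> iA B)) \<cdot> \<alpha> (src V x) (src V y) B)"

definition assoc_natural_A where
  "assoc_natural_A \<alpha> \<longleftrightarrow> (\<forall>u X Y. u \<in> arr A \<longrightarrow> X \<in> obj V \<longrightarrow> Y \<in> obj V \<longrightarrow>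
     \<alpha> X Y (tgt A u) \<cdot> (iV (tns V X Y) \<star> u) = (iV X \<star> (iV Y \<star> u)) \<cdot> \<alpha> X Y (src A u))"

definition assoc_natural where
  "assoc_natural \<alpha> \<longleftrightarrow> (\<forall>x \<in> arr V. \<forall>y \<in> arr V. \<forall>u \<in> arr A.
     \<alpha> (tgt V x) (tgt V y) (tgt A u) \<cdot> ((x \<otimes> y) \<star> u) = (x \<star> (y \<star> u)) \<cdot> \<alpha> (src V x) (src V y) (src A u))"

definition comp_natural_first where
  "comp_natural_first M \<longleftrightarrow> (\<forall>u \<in> arr A. \<forall>C \<in> obj A. \<forall>D \<in> obj A.
     M (src A u) C D \<bullet> (iV (ho C D) \<otimes> hm u (iA C)) = hm u (iA D) \<bullet> M (tgt A u) C D)"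

definition comp_natural_last where
  "comp_natural_last M \<longleftrightarrow> (\<forall>w \<in> arr A. \<forall>B \<in> obj A. \<forall>C \<in> obj A.
     M B C (tgt A w) \<bullet> (hm (iA C) w \<otimes> iV (ho B C)) = hm (iA B) w \<bullet> M B C (src A w))"

definition comp_extranatural_mid where
  "comp_extranatural_mid M \<longleftrightarrow> (\<forall>b \<in> arr A. \<forall>B \<in> obj A. \<forall>D \<in> obj A.
     M B (tgt A b) D \<bullet> (iV (ho (tgt A b) D) \<otimes> hm (iA B) b) =
     M B (src A b) D \<bullet> (hm b (iA D) \<otimes> iV (ho B (src A b))))"

definition lunit_natural where
  "lunit_natural lm \<longleftrightarrow> (\<forall>u \<in> arr A. lm (tgt A u) \<cdot> (iV II \<star> u) = u \<cdot> lm (src A u))"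

definition unit_extranatural where
  "unit_extranatural j \<longleftrightarrow> (\<forall>a \<in> arr A.
     hm (iA (src A a)) a \<bullet> j (src A a) = hm a (iA (tgt A a)) \<bullet> j (tgt A a))"

definition act_pentagon where
  "act_pentagon \<alpha> \<longleftrightarrow> (\<forall>X \<in> obj V. \<forall>Y \<in> obj V. \<forall>Z \<in> obj V. \<forall>B \<in> obj A.
     (iV X \<star> \<alpha> Y Z B) \<cdot> \<alpha> X (tns V Y Z) B \<cdot> (asc V X Y Z \<star> iA B) = \<alpha> X Y (ao Z B) \<cdot> \<alpha> (tns V X Y) Z B)"

definition vcat_assoc where
  "vcat_assoc M \<longleftrightarrow> (\<forall>B \<in> obj A. \<forall>C \<in> obj A. \<forall>D \<in> obj A. \<forall>E \<in> obj A.
     M B D E \<bullet> (iV (ho D E) \<otimes> M B C D) \<bullet> asc V (ho D E) (ho C D) (ho B C) =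
     M B C E \<bullet> (M C D E \<otimes> iV (ho B C)))"

definition act_left_unit where
  "act_left_unit \<alpha> lm \<longleftrightarrow> (\<forall>X \<in> obj V. \<forall>B \<in> obj A. lm (ao X B) \<cdot> \<alpha> II X B = lu V X \<star> iA B)"

definition vcat_left_unit where
  "vcat_left_unit M j \<longleftrightarrow> (\<forall>B \<in> obj A. \<forall>C \<in> obj A. M B C C \<bullet> (j C \<otimes> iV (ho B C)) = lu V (ho B C))"

definition act_right_unit where
  "act_right_unit \<alpha> lm \<longleftrightarrow> (\<forall>X \<in> obj V. \<forall>B \<in> obj A.
     (iV X \<star> lm B) \<cdot> \<alpha> X II B \<cdot> (ru V X \<star> iA B) = iA (ao X B))"

definition vcat_right_unit where
  "vcat_right_unit M j \<longleftrightarrow> (\<forall>B \<in> obj A. \<forall>C \<in> obj A.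
     M B B C \<bullet> (iV (ho B C) \<otimes> j B) \<bullet> ru V (ho B C) = iV (ho B C))"

definition tensored_comp where
  "tensored_comp M \<longleftrightarrow> (\<forall>Y \<in> obj V. \<forall>B \<in> obj A. \<forall>C \<in> obj A.
     \<forall>Q ev k. is_eval V Y (ho B C) Q ev \<longrightarrow> k \<in> hom V (ho (ao Y B) C) Q \<longrightarrow>
       ev \<bullet> (k \<otimes> iV Y) = M B (ao Y B) C \<bullet> (iV (ho (ao Y B) C) \<otimes> eta Y B) \<longrightarrow> iso_in V k)"

lemma assoc_typedD:
  assumes "assoc_typed \<alpha>" "X \<in> obj V" "Y \<in> obj V" "B \<in> obj A"
  shows "\<alpha> X Y B \<in> arr A" "src A (\<alpha> X Y B) = ao (tns V X Y) B" "tgt A (\<alpha> X Y B) = ao X (ao Y B)"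
  using assms unfolding assoc_typed_def by auto
lemma comp_typedD:
  assumes "comp_typed M" "B \<in> obj A" "C \<in> obj A" "D \<in> obj A"
  shows "M B C D \<in> arr V" "src V (M B C D) = tns V (ho C D) (ho B C)" "tgt V (M B C D) = ho B D"
  using assms unfolding comp_typed_def by auto

lemma correspD:
  assumes "corresp \<alpha> M" "B \<in> obj A" "C \<in> obj A" "D \<in> obj A" "f \<in> arr V" "tgt V f = ho C D"
   "g \<in> arr V" "tgt V g = ho B C"
  shows "psi (tns V (src V f) (src V g)) B D (M B C D \<bullet> (f \<otimes> g)) =
     psi (src V f) C D f \<cdot> (iV (src V f) \<star> psi (src V g) B C g) \<cdot> \<alpha> (src V f) (src V g) B"
  using assms unfolding corresp_def by (auto simp: typing_base)

lemma comp_of_assoc_typed: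
  assumes "assoc_typed \<alpha>" shows "comp_typed (comp_of_assoc \<alpha>)"
  unfolding comp_typed_def comp_of_assoc_def using assms by (auto simp: typing assoc_typedD)

lemma corresp_comp_of_assoc:
  assumes at: "assoc_typed \<alpha>"
    and nat: "assoc_natural_V \<alpha>"
  shows "corresp \<alpha> (comp_of_assoc \<alpha>)"
  unfolding corresp_def
proof (intro allI impI)
  fix X Y B C D f g
  assume o: "X \<in> obj V" "Y \<in> obj V" "B \<in> obj A" "C \<in> obj A" "D \<in> obj A"
    and f: "f \<in> arr V" "src V f = X" "tgt V f = ho C D"
    and g: "g \<in> arr V" "src V g = Y" "tgt V g = ho B C"
  note T = typing assoc_typedD[OF at] o f g
  have M_eq: "comp_of_assoc \<alpha> B C D = \<phi> (tns V (ho C D) (ho B C)) B D (eps C D \<cdot> (iV (ho C D) \<star> eps B C) \<cdot> \<alpha> (ho C D) (ho B C) B)"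
    using o by (simp add: comp_of_assoc_def)
  have precomp: "psi (tns V X Y) B D (comp_of_assoc \<alpha> B C D \<bullet> (f \<otimes> g)) =
     psi (tns V (ho C D) (ho B C)) B D (comp_of_assoc \<alpha> B C D) \<cdot> ((f \<otimes> g) \<star> iA B)"
    using psi_precomp[of "f \<otimes> g" "comp_of_assoc \<alpha> B C D" B D] comp_typedD[OF comp_of_assoc_typed[OF at] o(3,4,5)] T by simp
  have psi_M: "psi (tns V (ho C D) (ho B C)) B D (comp_of_assoc \<alpha> B C D) = eps C D \<cdot> (iV (ho C D) \<star> eps B C) \<cdot> \<alpha> (ho C D) (ho B C) B"
    unfolding M_eq by (rule psi_phi) (auto simp: T)
  have nat_fg: "\<alpha> (ho C D) (ho B C) B \<cdot> ((f \<otimes> g) \<star> iA B) = (f \<star> (g \<star> iA B)) \<cdot> \<alpha> X Y B"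
    using nat[unfolded assoc_natural_V_def, rule_format, OF f(1) g(1) o(3)] f g by simp
  have "psi (tns V X Y) B D (comp_of_assoc \<alpha> B C D \<bullet> (f \<otimes> g)) = eps C D \<cdot> (iV (ho C D) \<star> eps B C) \<cdot> (f \<star> (g \<star> iA B)) \<cdot> \<alpha> X Y B"
    unfolding precomp psi_M using nat_fg by (simp add: T)
  also have "\<dots> = psi X C D f \<cdot> (iV X \<star> psi Y B C g) \<cdot> \<alpha> X Y B"
    using psi_eq_eps[of f X C D] psi_eq_eps[of g Y B C] T by (simp add: merge)
  finally show "psi (tns V X Y) B D (comp_of_assoc \<alpha> B C D \<bullet> (f \<otimes> g)) = psi X C D f \<cdot> (iV X \<star> psi Y B C g) \<cdot> \<alpha> X Y B" .
qed

lemma assoc_of_comp_typed: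
  assumes "comp_typed M" shows "assoc_typed (assoc_of_comp M)"
  unfolding assoc_typed_def assoc_of_comp_def using assms by (auto simp: typing comp_typedD)

lemma corresp_assoc_of_comp:
  assumes Mt: "comp_typed M" and last: "comp_natural_last M" and mid: "comp_extranatural_mid M"
  shows "corresp (assoc_of_comp M) M"
  unfolding corresp_def
proof (intro allI impI)
  fix X Y B C D f g
  assume o: "X \<in> obj V" "Y \<in> obj V" "B \<in> obj A" "C \<in> obj A" "D \<in> obj A"
    and f: "f \<in> arr V" "src V f = X" "tgt V f = ho C D"
    and g: "g \<in> arr V" "src V g = Y" "tgt V g = ho B C"
  define E where "E = ao Y B"
  define F where "F = ao X E"
  define pf where "pf = psi X C D f"
  define pg where "pg = psi Y B C g"
  define w where "w = pf \<cdot> (iV X \<star> pg)"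
  have oE: "E \<in> obj A" "F \<in> obj A" using o by (auto simp: E_def F_def typing_base)
  note T0 = typing o f g oE comp_typedD[OF Mt]
  have pf: "pf \<in> arr A" "src A pf = ao X C" "tgt A pf = D" unfolding pf_def using T0 by auto
  have pg: "pg \<in> arr A" "src A pg = E" "tgt A pg = C" unfolding pg_def E_def using T0 by auto
  have w: "w \<in> arr A" "src A w = F" "tgt A w = D" unfolding w_def F_def using T0 pf pg by auto
  note T = T0 pf pg w E_def[symmetric] F_def[symmetric]
  have e2: "hm (iA B) pg \<bullet> eta Y B = g"
  proof -
    have "hm (iA B) pg \<bullet> eta Y B = \<phi> Y B C pg" using phi_eq_eta[of Y B pg] T0 pf pg by (simp add: E_def)
    also have "\<dots> = g" unfolding pg_def using T by (simp add: phi_psi')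
    finally show ?thesis .
  qed
  have e1: "hm (iA E) w \<bullet> eta X E = hm pg (iA D) \<bullet> f"
  proof -
    have "hm (iA E) w \<bullet> eta X E = \<phi> X E D w" using phi_eq_eta[of X E w] T0 w by (simp add: F_def)
    also have "\<dots> = hm pg (iA D) \<bullet> \<phi> X C D pf"
      using phi_precomp_action[of X pg pf] T unfolding w_def by simp
    also have "\<phi> X C D pf = f" unfolding pf_def using T by (simp add: phi_psi')
    finally show ?thesis .
  qed
  have "M B C D \<bullet> (f \<otimes> g) = M B C D \<bullet> (f \<otimes> (hm (iA B) pg \<bullet> eta Y B))" by (simp add: e2)
  also have "\<dots> = M B C D \<bullet> (iV (ho C D) \<otimes> hm (iA B) pg) \<bullet> (f \<otimes> eta Y B)"
    using T by (simp add: merge)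
  also have "\<dots> = M B E D \<bullet> (hm pg (iA D) \<otimes> iV (ho B E)) \<bullet> (f \<otimes> eta Y B)"
  proof -
    have m: "M B C D \<bullet> (iV (ho C D) \<otimes> hm (iA B) pg) = M B E D \<bullet> (hm pg (iA D) \<otimes> iV (ho B E))"
      using mid[unfolded comp_extranatural_mid_def, rule_format, of pg B D] pg o by simp
    show ?thesis by (rule V_precomp2[OF m]) (use T in \<open>auto simp: typing\<close>)
  qed
  also have "\<dots> = M B E D \<bullet> ((hm pg (iA D) \<bullet> f) \<otimes> eta Y B)"
    using T by (simp add: merge)
  also have "\<dots> = M B E D \<bullet> ((hm (iA E) w \<bullet> eta X E) \<otimes> eta Y B)" by (simp add: e1)
  also have "\<dots> = M B E D \<bullet> (hm (iA E) w \<otimes> iV (ho B E)) \<bullet> (eta X E \<otimes> eta Y B)"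
    using T by (simp add: merge)
  also have "\<dots> = hm (iA B) w \<bullet> M B E F \<bullet> (eta X E \<otimes> eta Y B)"
  proof -
    have m: "M B E D \<bullet> (hm (iA E) w \<otimes> iV (ho B E)) = hm (iA B) w \<bullet> M B E F"
      using last[unfolded comp_natural_last_def, rule_format, of w B E] w o oE by simp
    show ?thesis by (rule V_precomp2[OF m]) (use T in \<open>auto simp: typing\<close>)
  qed
  finally have eq: "M B C D \<bullet> (f \<otimes> g) = hm (iA B) w \<bullet> M B E F \<bullet> (eta X E \<otimes> eta Y B)" .
  have "psi (tns V X Y) B D (M B C D \<bullet> (f \<otimes> g)) = w \<cdot> psi (tns V X Y) B F (M B E F \<bullet> (eta X E \<otimes> eta Y B))"
    unfolding eq using psi_postcomp[of w "M B E F \<bullet> (eta X E \<otimes> eta Y B)" "tns V X Y" B] T by simp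
  also have "\<dots> = psi X C D f \<cdot> (iV X \<star> psi Y B C g) \<cdot> assoc_of_comp M X Y B"
    using T0 by (simp add: assoc_of_comp_def w_def pf_def pg_def E_def F_def)
  finally show "psi (tns V X Y) B D (M B C D \<bullet> (f \<otimes> g)) = psi X C D f \<cdot> (iV X \<star> psi Y B C g) \<cdot> assoc_of_comp M X Y B" .
qed

lemma assoc_natural_iff:
  assumes at: "assoc_typed \<alpha>"
  shows "assoc_natural \<alpha> \<longleftrightarrow> assoc_natural_V \<alpha> \<and> assoc_natural_A \<alpha>"
proof
  assume N: "assoc_natural \<alpha>"
  show "assoc_natural_V \<alpha> \<and> assoc_natural_A \<alpha>"
    unfolding assoc_natural_V_def assoc_natural_A_def
  proof (intro conjI allI impI)
    fix x y B assume "x \<in> arr V" "y \<in> arr V" "B \<in> obj A"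
    then show "\<alpha> (tgt V x) (tgt V y) B \<cdot> ((x \<otimes> y) \<star> iA B) = (x \<star> (y \<star> iA B)) \<cdot> \<alpha> (src V x) (src V y) B"
      using N[unfolded assoc_natural_def, rule_format, of x y "iA B"] by (simp add: typing_base)
  next
    fix u X Y assume "u \<in> arr A" "X \<in> obj V" "Y \<in> obj V"
    then show "\<alpha> X Y (tgt A u) \<cdot> (iV (tns V X Y) \<star> u) = (iV X \<star> (iV Y \<star> u)) \<cdot> \<alpha> X Y (src A u)"
      using N[unfolded assoc_natural_def, rule_format, of "iV X" "iV Y" u] by (simp add: typing_base tm_ide)
  qed
next
  assume N: "assoc_natural_V \<alpha> \<and> assoc_natural_A \<alpha>"
  show "assoc_natural \<alpha>"
    unfolding assoc_natural_def
  proof (intro ballI)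
    fix x y u assume x: "x \<in> arr V" and y: "y \<in> arr V" and u: "u \<in> arr A"
    note T = typing x y u assoc_typedD[OF at]
    have n1: "\<alpha> (tgt V x) (tgt V y) (tgt A u) \<cdot> ((x \<otimes> y) \<star> iA (tgt A u)) =
       (x \<star> (y \<star> iA (tgt A u))) \<cdot> \<alpha> (src V x) (src V y) (tgt A u)"
      using N x y u unfolding assoc_natural_V_def by (auto simp: typing_base)
    have n2: "\<alpha> (src V x) (src V y) (tgt A u) \<cdot> (iV (tns V (src V x) (src V y)) \<star> u) =
       (iV (src V x) \<star> (iV (src V y) \<star> u)) \<cdot> \<alpha> (src V x) (src V y) (src A u)"
      using N x y u unfolding assoc_natural_A_def by (auto simp: typing_base)
    have "\<alpha> (tgt V x) (tgt V y) (tgt A u) \<cdot> ((x \<otimes> y) \<star> u) =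
      \<alpha> (tgt V x) (tgt V y) (tgt A u) \<cdot> ((x \<otimes> y) \<star> iA (tgt A u)) \<cdot> (iV (tns V (src V x) (src V y)) \<star> u)"
      using T by (simp add: merge)
    also have "\<dots> = (x \<star> (y \<star> iA (tgt A u))) \<cdot> \<alpha> (src V x) (src V y) (tgt A u) \<cdot> (iV (tns V (src V x) (src V y)) \<star> u)"
      by (rule A_precomp2[OF n1]) (use T in auto)
    also have "\<dots> = (x \<star> (y \<star> iA (tgt A u))) \<cdot> (iV (src V x) \<star> (iV (src V y) \<star> u)) \<cdot> \<alpha> (src V x) (src V y) (src A u)"
      using n2 by simp
    also have "\<dots> = (x \<star> (y \<star> u)) \<cdot> \<alpha> (src V x) (src V y) (src A u)"
      using T by (simp add: merge)
    finally show "\<alpha> (tgt V x) (tgt V y) (tgt A u) \<cdot> ((x \<otimes> y) \<star> u) = (x \<star> (y \<star> u)) \<cdot> \<alpha> (src V x) (src V y) (src A u)" .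
  qed
qed

section \<open>Internal homs\<close>

lemma is_evalD:
  assumes "is_eval V Y Z Q ev"
  shows "Q \<in> obj V" "ev \<in> arr V" "src V ev = tns V Q Y" "tgt V ev = Z"
proof -
  have "Q \<in> obj V \<and> ev \<in> hom V (tns V Q Y) Z" using assms unfolding is_eval_def by blast
  then show "Q \<in> obj V" "ev \<in> arr V" "src V ev = tns V Q Y" "tgt V ev = Z" unfolding hom_def by auto
qed

lemma is_eval_unique:
  assumes E: "is_eval V Y Z Q ev" and X: "X \<in> obj V" and f: "f \<in> hom V (tns V X Y) Z"
  shows "\<exists>!g. g \<in> hom V X Q \<and> ev \<bullet> (g \<otimes> iV Y) = f"
proof -
  have all: "\<forall>X\<in>obj V. \<forall>f\<in>hom V (tns V X Y) Z. \<exists>!g. g \<in> hom V X Q \<and> ev \<bullet> (g \<otimes> iV Y) = f"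
    using E unfolding is_eval_def by (rule conjunct2[OF conjunct2])
  show ?thesis using all[rule_format, OF X f] .
qed

lemma is_eval_inj:
  assumes E: "is_eval V Y Z Q ev" and Y: "Y \<in> obj V" and X: "X \<in> obj V"
    and q1: "q1 \<in> arr V" "src V q1 = X" "tgt V q1 = Q"
    and q2: "q2 \<in> arr V" "src V q2 = X" "tgt V q2 = Q"
    and e: "ev \<bullet> (q1 \<otimes> iV Y) = ev \<bullet> (q2 \<otimes> iV Y)"
  shows "q1 = q2"
proof -
  note ed = is_evalD[OF E]
  have f: "ev \<bullet> (q1 \<otimes> iV Y) \<in> hom V (tns V X Y) Z" using ed q1 Y by (simp add: hom_def typing_base)
  have h1: "q1 \<in> hom V X Q" "q2 \<in> hom V X Q" using q1 q2 by (auto simp: hom_def)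
  have U: "\<exists>!g. g \<in> hom V X Q \<and> ev \<bullet> (g \<otimes> iV Y) = ev \<bullet> (q1 \<otimes> iV Y)"
    by (rule is_eval_unique[OF E X f])
  have "(THE g. g \<in> hom V X Q \<and> ev \<bullet> (g \<otimes> iV Y) = ev \<bullet> (q1 \<otimes> iV Y)) = q1"
    by (rule the1_equality[OF U]) (use h1 in simp)
  moreover have "(THE g. g \<in> hom V X Q \<and> ev \<bullet> (g \<otimes> iV Y) = ev \<bullet> (q1 \<otimes> iV Y)) = q2"
    by (rule the1_equality[OF U]) (use h1 e in simp)
  ultimately show ?thesis by simp
qed

lemma is_eval_surjE:
  assumes E: "is_eval V Y Z Q ev" and X: "X \<in> obj V"
    and f: "f \<in> arr V" "src V f = tns V X Y" "tgt V f = Z"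
  obtains q where "q \<in> arr V" "src V q = X" "tgt V q = Q" "ev \<bullet> (q \<otimes> iV Y) = f"
proof -
  have "f \<in> hom V (tns V X Y) Z" using f by (auto simp: hom_def)
  then obtain g where "g \<in> hom V X Q \<and> ev \<bullet> (g \<otimes> iV Y) = f" using is_eval_unique[OF E X] by blast
  then show ?thesis using that unfolding hom_def by blast
qed

section \<open>Transporting the axioms\<close>

context
  fixes lm j
  assumes L: "lunit_corresp lm j"
begin

lemma lunit_correspD:
  assumes "B \<in> obj A"
  shows "lm B \<in> arr A" "src A (lm B) = ao II B" "tgt A (lm B) = B" "j B = \<phi> II B B (lm B)"
    "j B \<in> arr V" "src V (j B) = II" "tgt V (j B) = ho B B" "psi II B B (j B) = lm B"
proof -
  show l: "lm B \<in> arr A" "src A (lm B) = ao II B" "tgt A (lm B) = B" "j B = \<phi> II B B (lm B)"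
    using L assms unfolding lunit_corresp_def by auto
  then show "j B \<in> arr V" "src V (j B) = II" "tgt V (j B) = ho B B"
    using assms by (auto simp: typing)
  show "psi II B B (j B) = lm B" using l assms by (simp add: psi_phi typing_base)
qed

lemma lunit_natural_iff: "lunit_natural lm \<longleftrightarrow> unit_extranatural j"
proof -
  have "lm (tgt A a) \<cdot> (iV II \<star> a) = a \<cdot> lm (src A a) \<longleftrightarrow>
     hm (iA (src A a)) a \<bullet> j (src A a) = hm a (iA (tgt A a)) \<bullet> j (tgt A a)" if a: "a \<in> arr A" for a
  proof -
    note T = typing a lunit_correspD
    have p1: "psi II (src A a) (tgt A a) (hm (iA (src A a)) a \<bullet> j (src A a)) = a \<cdot> lm (src A a)"
      using psi_postcomp[of a "j (src A a)" II "src A a"] T by simp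
    have p2: "psi II (src A a) (tgt A a) (hm a (iA (tgt A a)) \<bullet> j (tgt A a)) = lm (tgt A a) \<cdot> (iV II \<star> a)"
      using psi_hom_contra[of a "j (tgt A a)" II "tgt A a"] T by simp
    show ?thesis
    proof
      assume "lm (tgt A a) \<cdot> (iV II \<star> a) = a \<cdot> lm (src A a)"
      then show "hm (iA (src A a)) a \<bullet> j (src A a) = hm a (iA (tgt A a)) \<bullet> j (tgt A a)"
        using p1 p2 by (intro psi_eqI[of "src A a" "tgt A a" _ II]) (use T in auto)
    next
      assume "hm (iA (src A a)) a \<bullet> j (src A a) = hm a (iA (tgt A a)) \<bullet> j (tgt A a)"
      then show "lm (tgt A a) \<cdot> (iV II \<star> a) = a \<cdot> lm (src A a)" using p1 p2 by simp
    qed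
  qed
  then show ?thesis unfolding lunit_natural_def unit_extranatural_def by auto
qed

end

context
  fixes \<alpha> M
  assumes at: "assoc_typed \<alpha>" and Mt: "comp_typed M" and R: "corresp \<alpha> M"
begin

lemma psi_comp:
  assumes "B \<in> obj A" "C \<in> obj A" "D \<in> obj A"
  shows "psi (tns V (ho C D) (ho B C)) B D (M B C D) = eps C D \<cdot> (iV (ho C D) \<star> eps B C) \<cdot> \<alpha> (ho C D) (ho B C) B"
  using correspD[OF R assms, of "iV (ho C D)" "iV (ho B C)"] assms comp_typedD[OF Mt assms]
  by (simp add: typing tm_ide eps_def)

lemma assoc_eq_psi_comp:
  assumes "X \<in> obj V" "Y \<in> obj V" "B \<in> obj A"
  shows "\<alpha> X Y B = psi (tns V X Y) B (ao X (ao Y B)) (M B (ao Y B) (ao X (ao Y B)) \<bullet> (eta X (ao Y B) \<otimes> eta Y B))"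
  using correspD[OF R, of B "ao Y B" "ao X (ao Y B)" "eta X (ao Y B)" "eta Y B"] assms assoc_typedD[OF at assms]
  by (simp add: typing psi_eta am_ide)

lemma corresp_comp_natural_last: "comp_natural_last M"
  unfolding comp_natural_last_def
proof (intro ballI)
  fix w B C assume w: "w \<in> arr A" and o: "B \<in> obj A" "C \<in> obj A"
  note T = typing w o comp_typedD[OF Mt] assoc_typedD[OF at]
  show "M B C (tgt A w) \<bullet> (hm (iA C) w \<otimes> iV (ho B C)) = hm (iA B) w \<bullet> M B C (src A w)"
  proof (rule psi_eqI[of B "tgt A w"])
    have "psi (tns V (ho C (src A w)) (ho B C)) B (tgt A w) (M B C (tgt A w) \<bullet> (hm (iA C) w \<otimes> iV (ho B C)))
        = w \<cdot> eps C (src A w) \<cdot> (iV (ho C (src A w)) \<star> eps B C) \<cdot> \<alpha> (ho C (src A w)) (ho B C) B"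
      using correspD[OF R o(1,2), of "tgt A w" "hm (iA C) w" "iV (ho B C)"] psi_hm_cov[OF w o(2)] T
      by (simp add: eps_def[symmetric])
    also have "\<dots> = psi (tns V (ho C (src A w)) (ho B C)) B (tgt A w) (hm (iA B) w \<bullet> M B C (src A w))"
      using psi_postcomp[of w "M B C (src A w)" "tns V (ho C (src A w)) (ho B C)" B] psi_comp[OF o(1,2), of "src A w"] T
      by simp
    finally show "psi (tns V (ho C (src A w)) (ho B C)) B (tgt A w) (M B C (tgt A w) \<bullet> (hm (iA C) w \<otimes> iV (ho B C))) =
       psi (tns V (ho C (src A w)) (ho B C)) B (tgt A w) (hm (iA B) w \<bullet> M B C (src A w))" .
  qed (use T in auto)
qed

lemma corresp_comp_extranatural_mid: "comp_extranatural_mid M"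
  unfolding comp_extranatural_mid_def
proof (intro ballI)
  fix b B D assume b: "b \<in> arr A" and o: "B \<in> obj A" "D \<in> obj A"
  note T = typing b o comp_typedD[OF Mt] assoc_typedD[OF at]
  show "M B (tgt A b) D \<bullet> (iV (ho (tgt A b) D) \<otimes> hm (iA B) b) =
       M B (src A b) D \<bullet> (hm b (iA D) \<otimes> iV (ho B (src A b)))"
  proof (rule psi_eqI[of B D])
    have "psi (tns V (ho (tgt A b) D) (ho B (src A b))) B D (M B (tgt A b) D \<bullet> (iV (ho (tgt A b) D) \<otimes> hm (iA B) b))
       = eps (tgt A b) D \<cdot> (iV (ho (tgt A b) D) \<star> (b \<cdot> eps B (src A b))) \<cdot> \<alpha> (ho (tgt A b) D) (ho B (src A b)) B"
      using correspD[OF R o(1) _ o(2), of "tgt A b" "iV (ho (tgt A b) D)" "hm (iA B) b"] psi_hm_cov[OF b o(1)] T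
      by (simp add: eps_def[symmetric])
    also have "\<dots> = psi (tns V (ho (tgt A b) D) (ho B (src A b))) B D (M B (src A b) D \<bullet> (hm b (iA D) \<otimes> iV (ho B (src A b))))"
      using correspD[OF R o(1) _ o(2), of "src A b" "hm b (iA D)" "iV (ho B (src A b))"] psi_hm_contra[OF b o(2)] T
      by (simp add: eps_def[symmetric] merge)
    finally show "psi (tns V (ho (tgt A b) D) (ho B (src A b))) B D (M B (tgt A b) D \<bullet> (iV (ho (tgt A b) D) \<otimes> hm (iA B) b)) =
      psi (tns V (ho (tgt A b) D) (ho B (src A b))) B D (M B (src A b) D \<bullet> (hm b (iA D) \<otimes> iV (ho B (src A b))))" .
  qed (use T in auto)
qed

lemma corresp_assoc_natural_V: "assoc_natural_V \<alpha>"
  unfolding assoc_natural_V_def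
proof (intro allI impI)
  fix x y B assume x: "x \<in> arr V" and y: "y \<in> arr V" and B: "B \<in> obj A"
  define E where "E = ao (tgt V y) B"
  define F where "F = ao (tgt V x) E"
  note T = typing x y B comp_typedD[OF Mt] assoc_typedD[OF at]
  have oE: "E \<in> obj A" "F \<in> obj A" unfolding E_def F_def using T by auto
  have "\<alpha> (tgt V x) (tgt V y) B \<cdot> ((x \<otimes> y) \<star> iA B) =
     psi (tns V (tgt V x) (tgt V y)) B F (M B E F \<bullet> (eta (tgt V x) E \<otimes> eta (tgt V y) B)) \<cdot> ((x \<otimes> y) \<star> iA B)"
    using assoc_eq_psi_comp[of "tgt V x" "tgt V y" B] T by (simp add: E_def F_def)
  also have "\<dots> = psi (tns V (src V x) (src V y)) B F (M B E F \<bullet> (eta (tgt V x) E \<otimes> eta (tgt V y) B) \<bullet> (x \<otimes> y))"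
    using psi_precomp[of "x \<otimes> y" "M B E F \<bullet> (eta (tgt V x) E \<otimes> eta (tgt V y) B)" B F] T oE
    by (simp add: E_def F_def)
  also have "\<dots> = psi (tns V (src V x) (src V y)) B F (M B E F \<bullet> ((eta (tgt V x) E \<bullet> x) \<otimes> (eta (tgt V y) B \<bullet> y)))"
    using T oE by (simp add: E_def F_def merge)
  also have "\<dots> = psi (src V x) E F (eta (tgt V x) E \<bullet> x) \<cdot> (iV (src V x) \<star> psi (src V y) B E (eta (tgt V y) B \<bullet> y)) \<cdot> \<alpha> (src V x) (src V y) B"
    using correspD[OF R B oE(1) oE(2), of "eta (tgt V x) E \<bullet> x" "eta (tgt V y) B \<bullet> y"] T oE
    by (simp add: E_def F_def)
  also have "\<dots> = (x \<star> (y \<star> iA B)) \<cdot> \<alpha> (src V x) (src V y) B"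
    using psi_eta_precomp[OF x oE(1)] psi_eta_precomp[OF y B] T oE by (simp add: E_def F_def merge)
  finally show "\<alpha> (tgt V x) (tgt V y) B \<cdot> ((x \<otimes> y) \<star> iA B) = (x \<star> (y \<star> iA B)) \<cdot> \<alpha> (src V x) (src V y) B" .
qed

lemma comp_natural_first_if_assoc_natural_A: "assoc_natural_A \<alpha> \<Longrightarrow> comp_natural_first M"
  unfolding comp_natural_first_def
proof (intro ballI)
  assume N: "assoc_natural_A \<alpha>"
  fix u C D assume u: "u \<in> arr A" and o: "C \<in> obj A" "D \<in> obj A"
  note T = typing u o comp_typedD[OF Mt] assoc_typedD[OF at]
  have n: "\<alpha> (ho C D) (ho (tgt A u) C) (tgt A u) \<cdot> (iV (tns V (ho C D) (ho (tgt A u) C)) \<star> u) =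
    (iV (ho C D) \<star> (iV (ho (tgt A u) C) \<star> u)) \<cdot> \<alpha> (ho C D) (ho (tgt A u) C) (src A u)"
    using N u o unfolding assoc_natural_A_def by (auto simp: typing_base)
  show "M (src A u) C D \<bullet> (iV (ho C D) \<otimes> hm u (iA C)) = hm u (iA D) \<bullet> M (tgt A u) C D"
  proof (rule psi_eqI[of "src A u" D])
    have "psi (tns V (ho C D) (ho (tgt A u) C)) (src A u) D (M (src A u) C D \<bullet> (iV (ho C D) \<otimes> hm u (iA C))) =
      eps C D \<cdot> (iV (ho C D) \<star> (eps (tgt A u) C \<cdot> (iV (ho (tgt A u) C) \<star> u))) \<cdot> \<alpha> (ho C D) (ho (tgt A u) C) (src A u)"
      using correspD[OF R _ o, of "src A u" "iV (ho C D)" "hm u (iA C)"] psi_hm_contra[OF u o(1)] T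
      by (simp add: eps_def[symmetric])
    also have "\<dots> = eps C D \<cdot> (iV (ho C D) \<star> eps (tgt A u) C) \<cdot>
        (\<alpha> (ho C D) (ho (tgt A u) C) (tgt A u) \<cdot> (iV (tns V (ho C D) (ho (tgt A u) C)) \<star> u))"
      unfolding n using T by (simp add: merge)
    also have "\<dots> = psi (tns V (ho C D) (ho (tgt A u) C)) (src A u) D (hm u (iA D) \<bullet> M (tgt A u) C D)"
      using psi_hom_contra[of u "M (tgt A u) C D" "tns V (ho C D) (ho (tgt A u) C)" D] psi_comp[OF _ o, of "tgt A u"] T
      by simp
    finally show "psi (tns V (ho C D) (ho (tgt A u) C)) (src A u) D (M (src A u) C D \<bullet> (iV (ho C D) \<otimes> hm u (iA C))) =
      psi (tns V (ho C D) (ho (tgt A u) C)) (src A u) D (hm u (iA D) \<bullet> M (tgt A u) C D)" .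
  qed (use T in auto)
qed

lemma assoc_natural_A_if_comp_natural_first: "comp_natural_first M \<Longrightarrow> assoc_natural_A \<alpha>"
  unfolding assoc_natural_A_def
proof (intro allI impI)
  assume N: "comp_natural_first M"
  fix u X Y assume u: "u \<in> arr A" and o: "X \<in> obj V" "Y \<in> obj V"
  define E' where "E' = ao Y (tgt A u)"
  define F' where "F' = ao X E'"
  note T = typing u o comp_typedD[OF Mt] assoc_typedD[OF at]
  have oE: "E' \<in> obj A" "F' \<in> obj A" unfolding E'_def F'_def using T by auto
  have n: "M (src A u) E' F' \<bullet> (iV (ho E' F') \<otimes> hm u (iA E')) = hm u (iA F') \<bullet> M (tgt A u) E' F'"
    using N u oE unfolding comp_natural_first_def by auto
  have "\<alpha> X Y (tgt A u) \<cdot> (iV (tns V X Y) \<star> u) =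
     psi (tns V X Y) (tgt A u) F' (M (tgt A u) E' F' \<bullet> (eta X E' \<otimes> eta Y (tgt A u))) \<cdot> (iV (tns V X Y) \<star> u)"
    using assoc_eq_psi_comp[OF o, of "tgt A u"] T by (simp add: E'_def F'_def)
  also have "\<dots> = psi (tns V X Y) (src A u) F' (hm u (iA F') \<bullet> M (tgt A u) E' F' \<bullet> (eta X E' \<otimes> eta Y (tgt A u)))"
    using psi_hom_contra[of u "M (tgt A u) E' F' \<bullet> (eta X E' \<otimes> eta Y (tgt A u))" "tns V X Y" F'] T oE
    by (simp add: E'_def F'_def)
  also have "\<dots> = psi (tns V X Y) (src A u) F' (M (src A u) E' F' \<bullet> (iV (ho E' F') \<otimes> hm u (iA E')) \<bullet> (eta X E' \<otimes> eta Y (tgt A u)))"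
    by (subst V_precomp2[OF n]) (use T oE in \<open>auto simp: E'_def F'_def\<close>)
  also have "\<dots> = psi (tns V X Y) (src A u) F' (M (src A u) E' F' \<bullet> (eta X E' \<otimes> (hm u (iA E') \<bullet> eta Y (tgt A u))))"
    using T oE by (simp add: E'_def F'_def merge)
  also have "\<dots> = psi X E' F' (eta X E') \<cdot> (iV X \<star> psi Y (src A u) E' (hm u (iA E') \<bullet> eta Y (tgt A u))) \<cdot> \<alpha> X Y (src A u)"
    using correspD[OF R _ oE, of "src A u" "eta X E'" "hm u (iA E') \<bullet> eta Y (tgt A u)"] T oE
    by (simp add: E'_def F'_def)
  also have "\<dots> = (iV X \<star> (iV Y \<star> u)) \<cdot> \<alpha> X Y (src A u)"
    using psi_hom_contra[of u "eta Y (tgt A u)" Y E'] T oE by (simp add: E'_def F'_def psi_eta am_ide)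
  finally show "\<alpha> X Y (tgt A u) \<cdot> (iV (tns V X Y) \<star> u) = (iV X \<star> (iV Y \<star> u)) \<cdot> \<alpha> X Y (src A u)" .
qed

context
  fixes lm j
  assumes L: "lunit_corresp lm j"
begin

lemma vcat_left_unit_if_act_left_unit: "lunit_natural lm \<Longrightarrow> act_left_unit \<alpha> lm \<Longrightarrow> vcat_left_unit M j"
  unfolding vcat_left_unit_def
proof (intro ballI)
  assume N: "lunit_natural lm" and U: "act_left_unit \<alpha> lm"
  fix B C assume o: "B \<in> obj A" "C \<in> obj A"
  note T = typing o lunit_correspD[OF L] comp_typedD[OF Mt] assoc_typedD[OF at]
  have n: "lm C \<cdot> (iV II \<star> eps B C) = eps B C \<cdot> lm (ao (ho B C) B)"
    using N o unfolding lunit_natural_def by (auto simp: T dest: bspec[of _ _ "eps B C"])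
  have u: "lm (ao (ho B C) B) \<cdot> \<alpha> II (ho B C) B = lu V (ho B C) \<star> iA B"
    using U o unfolding act_left_unit_def by (auto simp: typing_base)
  show "M B C C \<bullet> (j C \<otimes> iV (ho B C)) = lu V (ho B C)"
  proof (rule psi_eqI[of B C])
    have "psi (tns V II (ho B C)) B C (M B C C \<bullet> (j C \<otimes> iV (ho B C))) = lm C \<cdot> (iV II \<star> eps B C) \<cdot> \<alpha> II (ho B C) B"
      using correspD[OF R o(1,2,2), of "j C" "iV (ho B C)"] T by (simp add: eps_def[symmetric])
    also have "\<dots> = eps B C \<cdot> (lu V (ho B C) \<star> iA B)"
      by (subst A_precomp2[OF n]) (use T u in auto)
    also have "\<dots> = psi (tns V II (ho B C)) B C (lu V (ho B C))"
      using psi_eq_eps[of "lu V (ho B C)" "tns V II (ho B C)" B C] T by simp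
    finally show "psi (tns V II (ho B C)) B C (M B C C \<bullet> (j C \<otimes> iV (ho B C))) = psi (tns V II (ho B C)) B C (lu V (ho B C))" .
  qed (use T in auto)
qed

lemma act_left_unit_if_vcat_left_unit: "vcat_left_unit M j \<Longrightarrow> act_left_unit \<alpha> lm"
  unfolding act_left_unit_def
proof (intro ballI)
  assume U: "vcat_left_unit M j"
  fix X B assume o: "X \<in> obj V" "B \<in> obj A"
  define E where "E = ao X B"
  note T = typing o lunit_correspD[OF L] comp_typedD[OF Mt] assoc_typedD[OF at]
  have oE: "E \<in> obj A" unfolding E_def using T by auto
  have u: "M B E E \<bullet> (j E \<otimes> iV (ho B E)) = lu V (ho B E)" using U o oE unfolding vcat_left_unit_def by auto
  have "M B E E \<bullet> (j E \<otimes> eta X B) = M B E E \<bullet> (j E \<otimes> iV (ho B E)) \<bullet> (iV II \<otimes> eta X B)"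
    using T oE by (simp add: merge E_def)
  also have "\<dots> = lu V (ho B E) \<bullet> (iV II \<otimes> eta X B)"
    by (subst V_precomp1[OF u]) (use T oE in \<open>auto simp: E_def\<close>)
  also have "\<dots> = eta X B \<bullet> lu V X"
    using lu_nat[of "eta X B"] T by (simp add: E_def)
  finally have e: "M B E E \<bullet> (j E \<otimes> eta X B) = eta X B \<bullet> lu V X" .
  have "lm E \<cdot> \<alpha> II X B = psi (tns V II X) B E (M B E E \<bullet> (j E \<otimes> eta X B))"
    using correspD[OF R o(2) oE oE, of "j E" "eta X B"] T oE by (simp add: E_def psi_eta am_ide)
  also have "\<dots> = lu V X \<star> iA B"
    unfolding e using psi_eta_precomp[of "lu V X" B] T by (simp add: E_def)
  finally show "lm (ao X B) \<cdot> \<alpha> II X B = lu V X \<star> iA B" by (simp add: E_def)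
qed

lemma vcat_right_unit_if_act_right_unit: "act_right_unit \<alpha> lm \<Longrightarrow> vcat_right_unit M j"
  unfolding vcat_right_unit_def
proof (intro ballI)
  assume U: "act_right_unit \<alpha> lm"
  fix B C assume o: "B \<in> obj A" "C \<in> obj A"
  note T = typing o lunit_correspD[OF L] comp_typedD[OF Mt] assoc_typedD[OF at]
  have u: "(iV (ho B C) \<star> lm B) \<cdot> \<alpha> (ho B C) II B \<cdot> (ru V (ho B C) \<star> iA B) = iA (ao (ho B C) B)"
    using U o unfolding act_right_unit_def by (auto simp: typing_base)
  show "M B B C \<bullet> (iV (ho B C) \<otimes> j B) \<bullet> ru V (ho B C) = iV (ho B C)"
  proof (rule psi_eqI[of B C])
    have "psi (ho B C) B C (M B B C \<bullet> (iV (ho B C) \<otimes> j B) \<bullet> ru V (ho B C)) =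
       psi (tns V (ho B C) II) B C (M B B C \<bullet> (iV (ho B C) \<otimes> j B)) \<cdot> (ru V (ho B C) \<star> iA B)"
      using psi_precomp[of "ru V (ho B C)" "M B B C \<bullet> (iV (ho B C) \<otimes> j B)" B C] T by simp
    also have "\<dots> = eps B C \<cdot> ((iV (ho B C) \<star> lm B) \<cdot> \<alpha> (ho B C) II B \<cdot> (ru V (ho B C) \<star> iA B))"
      using correspD[OF R o(1,1,2), of "iV (ho B C)" "j B"] T by (simp add: eps_def[symmetric])
    also have "\<dots> = psi (ho B C) B C (iV (ho B C))"
      unfolding u using T by (simp add: eps_def)
    finally show "psi (ho B C) B C (M B B C \<bullet> (iV (ho B C) \<otimes> j B) \<bullet> ru V (ho B C)) = psi (ho B C) B C (iV (ho B C))" .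
  qed (use T in auto)
qed

lemma act_right_unit_if_vcat_right_unit: "vcat_right_unit M j \<Longrightarrow> act_right_unit \<alpha> lm"
  unfolding act_right_unit_def
proof (intro ballI)
  assume U: "vcat_right_unit M j"
  fix X B assume o: "X \<in> obj V" "B \<in> obj A"
  define E where "E = ao X B"
  note T = typing o lunit_correspD[OF L] comp_typedD[OF Mt] assoc_typedD[OF at]
  have oE: "E \<in> obj A" unfolding E_def using T by auto
  have u: "M B B E \<bullet> (iV (ho B E) \<otimes> j B) \<bullet> ru V (ho B E) = iV (ho B E)" using U o oE unfolding vcat_right_unit_def by auto
  have "M B B E \<bullet> (eta X B \<otimes> j B) \<bullet> ru V X = M B B E \<bullet> (iV (ho B E) \<otimes> j B) \<bullet> (eta X B \<otimes> iV II) \<bullet> ru V X"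
    using T oE by (simp add: merge E_def)
  also have "\<dots> = M B B E \<bullet> (iV (ho B E) \<otimes> j B) \<bullet> ru V (ho B E) \<bullet> eta X B"
    using ru_nat[of "eta X B"] T by (simp add: E_def)
  also have "\<dots> = iV (ho B E) \<bullet> eta X B"
    by (subst V_precomp3[OF u]) (use T oE in \<open>auto simp: E_def\<close>)
  also have "\<dots> = eta X B" using T by (simp add: E_def)
  finally have e: "M B B E \<bullet> (eta X B \<otimes> j B) \<bullet> ru V X = eta X B" .
  have "(iV X \<star> lm B) \<cdot> \<alpha> X II B \<cdot> (ru V X \<star> iA B) = psi (tns V X II) B E (M B B E \<bullet> (eta X B \<otimes> j B)) \<cdot> (ru V X \<star> iA B)"
    using correspD[OF R o(2) o(2) oE, of "eta X B" "j B"] T oE by (simp add: E_def psi_eta)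
  also have "\<dots> = psi X B E (M B B E \<bullet> (eta X B \<otimes> j B) \<bullet> ru V X)"
    using psi_precomp[of "ru V X" "M B B E \<bullet> (eta X B \<otimes> j B)" B E] T oE by (simp add: E_def)
  also have "\<dots> = iA (ao X B)" unfolding e using T by (simp add: E_def psi_eta)
  finally show "(iV X \<star> lm B) \<cdot> \<alpha> X II B \<cdot> (ru V X \<star> iA B) = iA (ao X B)" .
qed

end

lemma vcat_assoc_if_act_pentagon: "assoc_natural_A \<alpha> \<Longrightarrow> act_pentagon \<alpha> \<Longrightarrow> vcat_assoc M"
  unfolding vcat_assoc_def
proof (intro ballI)
  assume N: "assoc_natural_A \<alpha>" and P: "act_pentagon \<alpha>"
  fix B C D E assume o: "B \<in> obj A" "C \<in> obj A" "D \<in> obj A" "E \<in> obj A"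
  define hDE where "hDE = ho D E"
  define hCD where "hCD = ho C D"
  define hBC where "hBC = ho B C"
  note T = typing o comp_typedD[OF Mt] assoc_typedD[OF at]
  have oh: "hDE \<in> obj V" "hCD \<in> obj V" "hBC \<in> obj V" unfolding hDE_def hCD_def hBC_def using T by auto
  have ee: "psi hDE D E (iV hDE) = eps D E" "psi hBC B C (iV hBC) = eps B C" "psi hCD C D (iV hCD) = eps C D"
    by (simp_all add: hDE_def hBC_def hCD_def eps_def)
  note T2 = T oh hDE_def[symmetric] hCD_def[symmetric] hBC_def[symmetric] ee
  have p: "(iV hDE \<star> \<alpha> hCD hBC B) \<cdot> \<alpha> hDE (tns V hCD hBC) B \<cdot> (asc V hDE hCD hBC \<star> iA B) =
     \<alpha> hDE hCD (ao hBC B) \<cdot> \<alpha> (tns V hDE hCD) hBC B"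
    using P oh o unfolding act_pentagon_def by auto
  have n0: "\<alpha> hDE hCD C \<cdot> (iV (tns V hDE hCD) \<star> eps B C) = (iV hDE \<star> (iV hCD \<star> eps B C)) \<cdot> \<alpha> hDE hCD (ao hBC B)"
    using N[unfolded assoc_natural_A_def, rule_format, of "eps B C" hDE hCD] oh T by (simp add: hBC_def)
  have n: "\<alpha> hDE hCD C \<cdot> (iV (tns V hDE hCD) \<star> eps B C) \<cdot> \<alpha> (tns V hDE hCD) hBC B =
     (iV hDE \<star> (iV hCD \<star> eps B C)) \<cdot> \<alpha> hDE hCD (ao hBC B) \<cdot> \<alpha> (tns V hDE hCD) hBC B"
    by (rule A_precomp2[OF n0]) (use T2 in auto)
  have pM: "\<And>B C D. B \<in> obj A \<Longrightarrow> C \<in> obj A \<Longrightarrow> D \<in> obj A \<Longrightarrow> psi (tns V (ho C D) (ho B C)) B D (M B C D) =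
      eps C D \<cdot> (iV (ho C D) \<star> eps B C) \<cdot> \<alpha> (ho C D) (ho B C) B"
    by (rule psi_comp)
  show "M B D E \<bullet> (iV (ho D E) \<otimes> M B C D) \<bullet> asc V (ho D E) (ho C D) (ho B C) = M B C E \<bullet> (M C D E \<otimes> iV (ho B C))"
  proof (rule psi_eqI[of B E _ "tns V (tns V hDE hCD) hBC"])
    have "psi (tns V (tns V hDE hCD) hBC) B E (M B D E \<bullet> (iV (ho D E) \<otimes> M B C D) \<bullet> asc V (ho D E) (ho C D) (ho B C)) =
       psi (tns V hDE (tns V hCD hBC)) B E (M B D E \<bullet> (iV (ho D E) \<otimes> M B C D)) \<cdot> (asc V hDE hCD hBC \<star> iA B)"
      using psi_precomp[of "asc V hDE hCD hBC" "M B D E \<bullet> (iV (ho D E) \<otimes> M B C D)" B E] T2 by simp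
    also have "\<dots> = eps D E \<cdot> (iV hDE \<star> (eps C D \<cdot> (iV hCD \<star> eps B C) \<cdot> \<alpha> hCD hBC B)) \<cdot> \<alpha> hDE (tns V hCD hBC) B \<cdot> (asc V hDE hCD hBC \<star> iA B)"
      using correspD[OF R o(1,3,4), of "iV (ho D E)" "M B C D"] pM[OF o(1,2,3)] T2 by (simp add: eps_def[symmetric])
    also have "\<dots> = eps D E \<cdot> (iV hDE \<star> eps C D) \<cdot> (iV hDE \<star> (iV hCD \<star> eps B C)) \<cdot>
        ((iV hDE \<star> \<alpha> hCD hBC B) \<cdot> \<alpha> hDE (tns V hCD hBC) B \<cdot> (asc V hDE hCD hBC \<star> iA B))"
      using T2 by (simp add: merge)
    also have "\<dots> = eps D E \<cdot> (iV hDE \<star> eps C D) \<cdot> (iV hDE \<star> (iV hCD \<star> eps B C)) \<cdot> \<alpha> hDE hCD (ao hBC B) \<cdot> \<alpha> (tns V hDE hCD) hBC B"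
      by (simp only: p)
    also have "\<dots> = eps D E \<cdot> (iV hDE \<star> eps C D) \<cdot> \<alpha> hDE hCD C \<cdot> (iV (tns V hDE hCD) \<star> eps B C) \<cdot> \<alpha> (tns V hDE hCD) hBC B"
      by (simp only: n)
    also have "\<dots> = psi (tns V (tns V hDE hCD) hBC) B E (M B C E \<bullet> (M C D E \<otimes> iV (ho B C)))"
      using correspD[OF R o(1,2,4), of "M C D E" "iV (ho B C)"] pM[OF o(2,3,4)] T2 by (simp add: eps_def[symmetric])
    finally show "psi (tns V (tns V hDE hCD) hBC) B E (M B D E \<bullet> (iV (ho D E) \<otimes> M B C D) \<bullet> asc V (ho D E) (ho C D) (ho B C)) =
      psi (tns V (tns V hDE hCD) hBC) B E (M B C E \<bullet> (M C D E \<otimes> iV (ho B C)))" .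
  qed (use T2 in auto)
qed

lemma act_pentagon_if_vcat_assoc: "vcat_assoc M \<Longrightarrow> act_pentagon \<alpha>"
  unfolding act_pentagon_def
proof (intro ballI)
  assume P: "vcat_assoc M"
  fix X Y Z B assume o: "X \<in> obj V" "Y \<in> obj V" "Z \<in> obj V" "B \<in> obj A"
  define C1 where "C1 = ao Z B"
  define C2 where "C2 = ao Y C1"
  define C3 where "C3 = ao X C2"
  note T = typing o comp_typedD[OF Mt] assoc_typedD[OF at]
  have oc: "C1 \<in> obj A" "C2 \<in> obj A" "C3 \<in> obj A" unfolding C1_def C2_def C3_def using T by auto
  have pe: "psi Z B C1 (eta Z B) = iA C1" "psi Y C1 C2 (eta Y C1) = iA C2" "psi X C2 C3 (eta X C2) = iA C3"
    using psi_eta o oc by (simp_all add: C1_def C2_def C3_def)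
  note T2 = T oc C1_def[symmetric] C2_def[symmetric] C3_def[symmetric] pe
  have a1: "\<alpha> X Y C1 = psi (tns V X Y) C1 C3 (M C1 C2 C3 \<bullet> (eta X C2 \<otimes> eta Y C1))"
    using assoc_eq_psi_comp[OF o(1,2) oc(1)] by (simp add: C2_def C3_def)
  have a2: "\<alpha> Y Z B = psi (tns V Y Z) B C2 (M B C1 C2 \<bullet> (eta Y C1 \<otimes> eta Z B))"
    using assoc_eq_psi_comp[OF o(2,3,4)] by (simp add: C1_def C2_def)
  have as: "M B C2 C3 \<bullet> (iV (ho C2 C3) \<otimes> M B C1 C2) \<bullet> asc V (ho C2 C3) (ho C1 C2) (ho B C1) =
     M B C1 C3 \<bullet> (M C1 C2 C3 \<otimes> iV (ho B C1))"
    using P oc o unfolding vcat_assoc_def by auto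
  have "M B C1 C3 \<bullet> ((M C1 C2 C3 \<bullet> (eta X C2 \<otimes> eta Y C1)) \<otimes> eta Z B) =
        M B C1 C3 \<bullet> (M C1 C2 C3 \<otimes> iV (ho B C1)) \<bullet> ((eta X C2 \<otimes> eta Y C1) \<otimes> eta Z B)"
    using T2 by (simp add: merge)
  also have "\<dots> = M B C2 C3 \<bullet> (iV (ho C2 C3) \<otimes> M B C1 C2) \<bullet> asc V (ho C2 C3) (ho C1 C2) (ho B C1) \<bullet> ((eta X C2 \<otimes> eta Y C1) \<otimes> eta Z B)"
    by (rule V_precomp32[OF as]) (use T2 in auto)
  also have "\<dots> = M B C2 C3 \<bullet> (iV (ho C2 C3) \<otimes> M B C1 C2) \<bullet> (eta X C2 \<otimes> (eta Y C1 \<otimes> eta Z B)) \<bullet> asc V X Y Z"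
    using asc_nat[of "eta X C2" "eta Y C1" "eta Z B"] T2 by simp
  also have "\<dots> = M B C2 C3 \<bullet> (eta X C2 \<otimes> (M B C1 C2 \<bullet> (eta Y C1 \<otimes> eta Z B))) \<bullet> asc V X Y Z"
    using T2 by (simp add: merge)
  finally have e: "M B C1 C3 \<bullet> ((M C1 C2 C3 \<bullet> (eta X C2 \<otimes> eta Y C1)) \<otimes> eta Z B) =
     M B C2 C3 \<bullet> (eta X C2 \<otimes> (M B C1 C2 \<bullet> (eta Y C1 \<otimes> eta Z B))) \<bullet> asc V X Y Z" .
  have "\<alpha> X Y C1 \<cdot> \<alpha> (tns V X Y) Z B = psi (tns V (tns V X Y) Z) B C3 (M B C1 C3 \<bullet> ((M C1 C2 C3 \<bullet> (eta X C2 \<otimes> eta Y C1)) \<otimes> eta Z B))"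
    using correspD[OF R o(4) oc(1,3), of "M C1 C2 C3 \<bullet> (eta X C2 \<otimes> eta Y C1)" "eta Z B"] a1 T2 by (simp add: psi_eta am_ide)
  also have "\<dots> = psi (tns V X (tns V Y Z)) B C3 (M B C2 C3 \<bullet> (eta X C2 \<otimes> (M B C1 C2 \<bullet> (eta Y C1 \<otimes> eta Z B)))) \<cdot> (asc V X Y Z \<star> iA B)"
    unfolding e using psi_precomp[of "asc V X Y Z" "M B C2 C3 \<bullet> (eta X C2 \<otimes> (M B C1 C2 \<bullet> (eta Y C1 \<otimes> eta Z B)))" B C3] T2 by simp
  also have "\<dots> = (iV X \<star> \<alpha> Y Z B) \<cdot> \<alpha> X (tns V Y Z) B \<cdot> (asc V X Y Z \<star> iA B)"
    using correspD[OF R o(4) oc(2,3), of "eta X C2" "M B C1 C2 \<bullet> (eta Y C1 \<otimes> eta Z B)"] a2 T2 by (simp add: psi_eta)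
  finally show "(iV X \<star> \<alpha> Y Z B) \<cdot> \<alpha> X (tns V Y Z) B \<cdot> (asc V X Y Z \<star> iA B) = \<alpha> X Y (ao Z B) \<cdot> \<alpha> (tns V X Y) Z B"
    by (simp add: C1_def)
qed

lemma psi_eval_comparison:
  assumes Y: "Y \<in> obj V" and B: "B \<in> obj A" and C: "C \<in> obj A"
    and E: "is_eval V Y (ho B C) Q ev"
    and k: "k \<in> arr V" "src V k = ho (ao Y B) C" "tgt V k = Q"
    and ke: "ev \<bullet> (k \<otimes> iV Y) = M B (ao Y B) C \<bullet> (iV (ho (ao Y B) C) \<otimes> eta Y B)"
    and h: "h \<in> arr V" "src V h = X" "tgt V h = ho (ao Y B) C"
  shows "psi (tns V X Y) B C (ev \<bullet> ((k \<bullet> h) \<otimes> iV Y)) = psi X (ao Y B) C h \<cdot> \<alpha> X Y B"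
proof -
  define Ee where "Ee = ao Y B"
  note ed = is_evalD[OF E]
  have oE: "Ee \<in> obj A" using Y B by (simp add: Ee_def typing_base)
  have X: "X \<in> obj V" using h by (auto simp: typing_base)
  note T = typing Y B C oE X k h ed comp_typedD[OF Mt] assoc_typedD[OF at] Ee_def[symmetric]
  have pe: "psi Y B Ee (eta Y B) = iA Ee" using psi_eta[OF Y B] by (simp add: Ee_def)
  have ke': "ev \<bullet> (k \<otimes> iV Y) = M B Ee C \<bullet> (iV (ho Ee C) \<otimes> eta Y B)" using ke by (simp add: Ee_def)
  have "ev \<bullet> ((k \<bullet> h) \<otimes> iV Y) = ev \<bullet> (k \<otimes> iV Y) \<bullet> (h \<otimes> iV Y)"
    using T by (simp add: merge)
  also have "\<dots> = M B Ee C \<bullet> (iV (ho Ee C) \<otimes> eta Y B) \<bullet> (h \<otimes> iV Y)"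
    by (rule V_precomp2[OF ke']) (use T in auto)
  also have "\<dots> = M B Ee C \<bullet> (h \<otimes> eta Y B)"
    using T by (simp add: merge)
  finally have e: "ev \<bullet> ((k \<bullet> h) \<otimes> iV Y) = M B Ee C \<bullet> (h \<otimes> eta Y B)" .
  show ?thesis unfolding e
    using correspD[OF R B oE C, of h "eta Y B"] T pe by (simp add: am_ide)
qed

lemma tensored_if_assoc_iso:
  assumes I: "\<forall>X \<in> obj V. \<forall>Y \<in> obj V. \<forall>B \<in> obj A. iso_in A (\<alpha> X Y B)"
  shows "tensored_comp M"
  unfolding tensored_comp_def
proof (intro ballI allI impI)
  fix Y B C Q ev k
  assume Y: "Y \<in> obj V" and B: "B \<in> obj A" and C: "C \<in> obj A"
    and E: "is_eval V Y (ho B C) Q ev" and kh: "k \<in> hom V (ho (ao Y B) C) Q"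
    and ke: "ev \<bullet> (k \<otimes> iV Y) = M B (ao Y B) C \<bullet> (iV (ho (ao Y B) C) \<otimes> eta Y B)"
  define Ee where "Ee = ao Y B"
  define S where "S = ho Ee C"
  note ed = is_evalD[OF E]
  have k: "k \<in> arr V" "src V k = S" "tgt V k = Q" using kh by (auto simp: hom_def S_def Ee_def)
  have oE: "Ee \<in> obj A" "S \<in> obj V" using Y B C by (simp_all add: Ee_def S_def typing_base)
  note T = typing Y B C oE k ed comp_typedD[OF Mt] assoc_typedD[OF at] Ee_def[symmetric] S_def[symmetric]
  have KK: "\<And>h X. h \<in> arr V \<Longrightarrow> src V h = X \<Longrightarrow> tgt V h = S \<Longrightarrow>
      psi (tns V X Y) B C (ev \<bullet> ((k \<bullet> h) \<otimes> iV Y)) = psi X Ee C h \<cdot> \<alpha> X Y B"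
    using psi_eval_comparison[OF Y B C E k(1) _ _ ke] k by (simp add: S_def Ee_def)
  have Ia: "iso_in A (\<alpha> Q Y B)" using I ed Y B by auto
  obtain ai where ai0: "ai \<in> arr A" "src A ai = tgt A (\<alpha> Q Y B)" "tgt A ai = src A (\<alpha> Q Y B)"
     "ai \<cdot> \<alpha> Q Y B = iA (src A (\<alpha> Q Y B))" "\<alpha> Q Y B \<cdot> ai = iA (tgt A (\<alpha> Q Y B))"
    by (rule iso_inE[OF Ia])
  have sa: "src A (\<alpha> Q Y B) = ao (tns V Q Y) B" "tgt A (\<alpha> Q Y B) = ao Q Ee" "\<alpha> Q Y B \<in> arr A"
    using assoc_typedD[OF at ed(1) Y B] by (simp_all add: Ee_def)
  have ai: "ai \<in> arr A" "src A ai = ao Q Ee" "tgt A ai = ao (tns V Q Y) B"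
     "ai \<cdot> \<alpha> Q Y B = iA (ao (tns V Q Y) B)" "\<alpha> Q Y B \<cdot> ai = iA (ao Q Ee)"
    using ai0 unfolding sa by simp_all
  define e0 where "e0 = psi (tns V Q Y) B C ev"
  have e0: "e0 \<in> arr A" "src A e0 = ao (tns V Q Y) B" "tgt A e0 = C" unfolding e0_def using T by auto
  define h where "h = \<phi> Q Ee C (e0 \<cdot> ai)"
  have h: "h \<in> arr V" "src V h = Q" "tgt V h = S" unfolding h_def using T e0 ai by auto
  have ph: "psi Q Ee C h = e0 \<cdot> ai" unfolding h_def by (rule psi_phi) (use T e0 ai in auto)
  have kh1: "k \<bullet> h = iV Q"
  proof (rule is_eval_inj[OF E Y ed(1)])
    have "psi (tns V Q Y) B C (ev \<bullet> ((k \<bullet> h) \<otimes> iV Y)) = e0 \<cdot> ai \<cdot> \<alpha> Q Y B" using KK[OF h] ph T e0 ai by simp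
    also have "\<dots> = e0" using ai e0 T by simp
    also have "\<dots> = psi (tns V Q Y) B C (ev \<bullet> (iV Q \<otimes> iV Y))" using T by (simp add: e0_def tm_ide)
    finally have "psi (tns V Q Y) B C (ev \<bullet> ((k \<bullet> h) \<otimes> iV Y)) = psi (tns V Q Y) B C (ev \<bullet> (iV Q \<otimes> iV Y))" .
    then show "ev \<bullet> ((k \<bullet> h) \<otimes> iV Y) = ev \<bullet> (iV Q \<otimes> iV Y)"
      by (rule psi_eqI[rotated -1]) (use T h in simp_all)
  qed (use T h in simp_all)
  have hk: "h \<bullet> k = iV S"
  proof -
    have Ia2: "iso_in A (\<alpha> S Y B)" using I oE Y B by auto
    have "k \<bullet> (h \<bullet> k) = k \<bullet> iV S"
      using kh1 T h cat_assoc[OF V_is_cat k(1) h(1) k(1)] by simp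
    then have "psi S Ee C (h \<bullet> k) \<cdot> \<alpha> S Y B = psi S Ee C (iV S) \<cdot> \<alpha> S Y B"
      using KK[of "h \<bullet> k" S] KK[of "iV S" S] T h by simp
    then have "psi S Ee C (h \<bullet> k) = psi S Ee C (iV S)"
      by (rule iso_in_cancel_right[OF A_is_cat Ia2, rotated -1]) (use T h in simp_all)
    then show ?thesis by (rule psi_eqI[rotated -1]) (use T h in simp_all)
  qed
  show "iso_in V k" unfolding iso_in_def hom_def using k h kh1 hk by auto
qed

lemma comparison_isoE:
  assumes clo: "\<forall>Y \<in> obj V. \<forall>Z \<in> obj V. \<exists>Q ev. is_eval V Y Z Q ev"
    and TC: "tensored_comp M" and Y: "Y \<in> obj V" and B: "B \<in> obj A" and C: "C \<in> obj A"
  obtains Q ev k where "is_eval V Y (ho B C) Q ev" "k \<in> arr V" "src V k = ho (ao Y B) C" "tgt V k = Q"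
    "ev \<bullet> (k \<otimes> iV Y) = M B (ao Y B) C \<bullet> (iV (ho (ao Y B) C) \<otimes> eta Y B)" "iso_in V k"
proof -
  obtain Q ev where E: "is_eval V Y (ho B C) Q ev" using clo Y B C by (meson ho_obj)
  have oE: "ao Y B \<in> obj A" "ho (ao Y B) C \<in> obj V" using Y B C by (simp_all add: typing_base)
  have f: "M B (ao Y B) C \<bullet> (iV (ho (ao Y B) C) \<otimes> eta Y B) \<in> arr V"
    "src V (M B (ao Y B) C \<bullet> (iV (ho (ao Y B) C) \<otimes> eta Y B)) = tns V (ho (ao Y B) C) Y"
    "tgt V (M B (ao Y B) C \<bullet> (iV (ho (ao Y B) C) \<otimes> eta Y B)) = ho B C"
    using Y B C oE comp_typedD[OF Mt B oE(1) C] by (simp_all add: typing)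
  obtain k where k: "k \<in> arr V" "src V k = ho (ao Y B) C" "tgt V k = Q"
    "ev \<bullet> (k \<otimes> iV Y) = M B (ao Y B) C \<bullet> (iV (ho (ao Y B) C) \<otimes> eta Y B)"
    by (rule is_eval_surjE[OF E oE(2) f])
  have kh: "k \<in> hom V (ho (ao Y B) C) Q" using k by (simp add: hom_def)
  have "iso_in V k"
    using TC Y B C E kh k(4) unfolding tensored_comp_def by blast
  then show ?thesis using that E k by blast
qed

lemma assoc_left_inverse_if_tensored:
  assumes clo: "\<forall>Y \<in> obj V. \<forall>Z \<in> obj V. \<exists>Q ev. is_eval V Y Z Q ev"
    and TC: "tensored_comp M" and X: "X \<in> obj V" and Y: "Y \<in> obj V" and B: "B \<in> obj A"
  obtains g where "g \<in> arr A" "src A g = ao X (ao Y B)" "tgt A g = ao (tns V X Y) B"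
    "g \<cdot> \<alpha> X Y B = iA (ao (tns V X Y) B)"
proof -
  define Ee where "Ee = ao Y B"
  define C where "C = ao (tns V X Y) B"
  have o: "Ee \<in> obj A" "C \<in> obj A" "tns V X Y \<in> obj V"
    using X Y B by (simp_all add: Ee_def C_def typing_base)
  obtain Q ev k where E: "is_eval V Y (ho B C) Q ev" and k: "k \<in> arr V" "src V k = ho Ee C" "tgt V k = Q"
    and ke: "ev \<bullet> (k \<otimes> iV Y) = M B (ao Y B) C \<bullet> (iV (ho (ao Y B) C) \<otimes> eta Y B)" and ki: "iso_in V k"
    using comparison_isoE[OF clo TC Y B o(2)] unfolding Ee_def by metis
  obtain kinv where kinv: "kinv \<in> arr V" "src V kinv = Q" "tgt V kinv = ho Ee C" "k \<bullet> kinv = iV Q"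
    using iso_inE[OF ki] k by metis
  define f0 where "f0 = \<phi> (tns V X Y) B C (iA C)"
  have f0: "f0 \<in> arr V" "src V f0 = tns V X Y" "tgt V f0 = ho B C"
    unfolding f0_def using o B by (simp_all add: typing C_def)
  obtain q0 where q0: "q0 \<in> arr V" "src V q0 = X" "tgt V q0 = Q" "ev \<bullet> (q0 \<otimes> iV Y) = f0"
    by (rule is_eval_surjE[OF E X f0])
  define h where "h = kinv \<bullet> q0"
  have h: "h \<in> arr V" "src V h = X" "tgt V h = ho Ee C"
    unfolding h_def using kinv q0 by (simp_all add: typing_base)
  have kh: "k \<bullet> h = q0"
    unfolding h_def using cat_assoc[OF V_is_cat q0(1) kinv(1) k(1)] kinv q0 k by (simp add: typing_base)
  define g where "g = psi X Ee C h"
  have g: "g \<in> arr A" "src A g = ao X Ee" "tgt A g = C"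
    unfolding g_def using h o by (simp_all add: typing)
  have "psi (tns V X Y) B C (ev \<bullet> ((k \<bullet> h) \<otimes> iV Y)) = g \<cdot> \<alpha> X Y B"
    unfolding g_def Ee_def
    by (rule psi_eval_comparison[OF Y B o(2) E k(1) _ k(3) ke]) (use k h in \<open>simp_all add: Ee_def\<close>)
  moreover have "psi (tns V X Y) B C (ev \<bullet> ((k \<bullet> h) \<otimes> iV Y)) = iA C"
    unfolding kh q0(4) f0_def by (rule psi_phi) (use o B in \<open>simp_all add: typing_base C_def\<close>)
  ultimately show ?thesis using that g by (simp add: Ee_def C_def)
qed

lemma assoc_cancel_right_if_tensored:
  assumes clo: "\<forall>Y \<in> obj V. \<forall>Z \<in> obj V. \<exists>Q ev. is_eval V Y Z Q ev"
    and TC: "tensored_comp M" and X: "X \<in> obj V" and Y: "Y \<in> obj V" and B: "B \<in> obj A"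
    and p: "p \<in> arr A" "src A p = ao X (ao Y B)"
    and q: "q \<in> arr A" "src A q = ao X (ao Y B)" "tgt A q = tgt A p"
    and e: "p \<cdot> \<alpha> X Y B = q \<cdot> \<alpha> X Y B"
  shows "p = q"
proof -
  define Ee where "Ee = ao Y B"
  define C where "C = tgt A p"
  have o: "Ee \<in> obj A" "C \<in> obj A" using Y B p by (simp_all add: Ee_def C_def typing_base)
  have pq: "src A p = ao X Ee" "tgt A p = C" "src A q = ao X Ee" "tgt A q = C"
    using p q by (simp_all add: Ee_def C_def)
  obtain Q ev k where E: "is_eval V Y (ho B C) Q ev" and k: "k \<in> arr V" "src V k = ho Ee C" "tgt V k = Q"
    and ke: "ev \<bullet> (k \<otimes> iV Y) = M B (ao Y B) C \<bullet> (iV (ho (ao Y B) C) \<otimes> eta Y B)" and ki: "iso_in V k"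
    using comparison_isoE[OF clo TC Y B o(2)] unfolding Ee_def by metis
  have transpose: "psi (tns V X Y) B C (ev \<bullet> ((k \<bullet> \<phi> X Ee C r) \<otimes> iV Y)) = r \<cdot> \<alpha> X Y B"
    if r: "r \<in> arr A" "src A r = ao X Ee" "tgt A r = C" for r
  proof -
    have "psi (tns V X Y) B C (ev \<bullet> ((k \<bullet> \<phi> X Ee C r) \<otimes> iV Y)) = psi X Ee C (\<phi> X Ee C r) \<cdot> \<alpha> X Y B"
      unfolding Ee_def
      by (rule psi_eval_comparison[OF Y B o(2) E k(1) _ k(3) ke]) (use k r X o in \<open>simp_all add: typing Ee_def\<close>)
    then show ?thesis using r X o by (simp add: psi_phi)
  qed
  have "ev \<bullet> ((k \<bullet> \<phi> X Ee C p) \<otimes> iV Y) = ev \<bullet> ((k \<bullet> \<phi> X Ee C q) \<otimes> iV Y)"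
    by (rule psi_eqI[of B C _ "tns V X Y"])
      (use transpose[OF p(1) pq(1,2)] transpose[OF q(1) pq(3,4)] e B o X Y k p(1) q(1) pq is_evalD[OF E]
        in \<open>simp_all add: typing\<close>)
  then have "k \<bullet> \<phi> X Ee C p = k \<bullet> \<phi> X Ee C q"
    by (rule is_eval_inj[OF E Y X, rotated -1]) (use k p(1) q(1) pq X o in \<open>simp_all add: typing\<close>)
  then have "\<phi> X Ee C p = \<phi> X Ee C q"
    by (rule iso_in_cancel_left[OF V_is_cat ki, rotated -1]) (use k p(1) q(1) pq X o in \<open>simp_all add: typing\<close>)
  then show ?thesis
    using psi_phi[OF X o(1) p(1) pq(1,2)] psi_phi[OF X o(1) q(1) pq(3,4)] by metis
qed

lemma assoc_iso_if_tensored: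
  assumes clo: "\<forall>Y \<in> obj V. \<forall>Z \<in> obj V. \<exists>Q ev. is_eval V Y Z Q ev"
    and TC: "tensored_comp M" and X: "X \<in> obj V" and Y: "Y \<in> obj V" and B: "B \<in> obj A"
  shows "iso_in A (\<alpha> X Y B)"
proof -
  obtain g where g: "g \<in> arr A" "src A g = ao X (ao Y B)" "tgt A g = ao (tns V X Y) B"
    and left: "g \<cdot> \<alpha> X Y B = iA (ao (tns V X Y) B)"
    by (rule assoc_left_inverse_if_tensored[OF clo TC X Y B])
  note a = assoc_typedD[OF at X Y B]
  have "(\<alpha> X Y B \<cdot> g) \<cdot> \<alpha> X Y B = iA (ao X (ao Y B)) \<cdot> \<alpha> X Y B"
    using cat_assoc[OF A_is_cat a(1) g(1) a(1)] left a g by (simp add: typing_base)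
  then have right: "\<alpha> X Y B \<cdot> g = iA (ao X (ao Y B))"
    by (rule assoc_cancel_right_if_tensored[OF clo TC X Y B, rotated -1])
      (use a g X Y B in \<open>simp_all add: typing_base\<close>)
  show ?thesis unfolding iso_in_def hom_def using a g left right by auto
qed

end

section \<open>The bijections\<close>

lemma skew_actegory_str_iff:
  "skew_actegory_str V A ao am (\<alpha>, lm) \<longleftrightarrow>
    (\<forall>X Y B. \<not> (X \<in> obj V \<and> Y \<in> obj V \<and> B \<in> obj A) \<longrightarrow> \<alpha> X Y B = undefined) \<and>
    (\<forall>B. B \<notin> obj A \<longrightarrow> lm B = undefined) \<and> assoc_typed \<alpha> \<and> lunit_typed lm \<and> assoc_natural \<alpha> \<and> lunit_natural lm \<and>
    act_pentagon \<alpha> \<and> act_left_unit \<alpha> lm \<and> act_right_unit \<alpha> lm"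
  unfolding skew_actegory_str_def assoc_typed_def lunit_typed_def assoc_natural_def lunit_natural_def act_pentagon_def act_left_unit_def act_right_unit_def hom_def
  by auto

lemma skew_vcat_str_iff:
  "skew_vcat_str V A ho hm (M, j) \<longleftrightarrow>
    (\<forall>B C D. \<not> (B \<in> obj A \<and> C \<in> obj A \<and> D \<in> obj A) \<longrightarrow> M B C D = undefined) \<and>
    (\<forall>B. B \<notin> obj A \<longrightarrow> j B = undefined) \<and> comp_typed M \<and> unit_typed j \<and> comp_natural_first M \<and> comp_natural_last M \<and> comp_extranatural_mid M \<and>
    unit_extranatural j \<and> vcat_assoc M \<and> vcat_left_unit M j \<and> vcat_right_unit M j"
  unfolding skew_vcat_str_def comp_typed_def unit_typed_def comp_natural_first_def comp_natural_last_def comp_extranatural_mid_def unit_extranatural_def vcat_assoc_def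
    vcat_left_unit_def vcat_right_unit_def hom_def
  by auto

definition vcat_of_act where "vcat_of_act s = (case s of (\<alpha>, lm) \<Rightarrow> (comp_of_assoc \<alpha>, unit_of_lunit lm))"
definition act_of_vcat where "act_of_vcat t = (case t of (M, j) \<Rightarrow> (assoc_of_comp M, lunit_of_unit j))"

lemma lunit_corresp_unit_of_lunit: "lunit_typed lm \<Longrightarrow> lunit_corresp lm (unit_of_lunit lm)"
  unfolding lunit_typed_def lunit_corresp_def unit_of_lunit_def by auto

lemma lunit_corresp_lunit_of_unit: "unit_typed j \<Longrightarrow> lunit_corresp (lunit_of_unit j) j"
  unfolding unit_typed_def lunit_corresp_def lunit_of_unit_def by (auto simp: typing_transpose phi_psi')

lemma unit_typed_unit_of_lunit: "lunit_typed lm \<Longrightarrow> unit_typed (unit_of_lunit lm)"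
  unfolding lunit_typed_def unit_typed_def unit_of_lunit_def by (auto simp: typing_transpose)

lemma lunit_typed_lunit_of_unit: "unit_typed j \<Longrightarrow> lunit_typed (lunit_of_unit j)"
  unfolding lunit_typed_def unit_typed_def lunit_of_unit_def by (auto simp: typing_transpose)

lemma vcat_of_act_skew:
  assumes "skew_actegory_str V A ao am s"
  shows "skew_vcat_str V A ho hm (vcat_of_act s)"
proof -
  obtain \<alpha> lm where s: "s = (\<alpha>, lm)" by (cases s)
  have H: "assoc_typed \<alpha>" "lunit_typed lm" "assoc_natural \<alpha>" "lunit_natural lm" "act_pentagon \<alpha>" "act_left_unit \<alpha> lm" "act_right_unit \<alpha> lm"
    using assms unfolding s skew_actegory_str_iff by auto
  have N: "assoc_natural_V \<alpha>" "assoc_natural_A \<alpha>" using assoc_natural_iff[OF H(1)] H(3) by auto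
  have R: "corresp \<alpha> (comp_of_assoc \<alpha>)" by (rule corresp_comp_of_assoc[OF H(1) N(1)])
  have Mt: "comp_typed (comp_of_assoc \<alpha>)" by (rule comp_of_assoc_typed[OF H(1)])
  have L: "lunit_corresp lm (unit_of_lunit lm)" by (rule lunit_corresp_unit_of_lunit[OF H(2)])
  show ?thesis unfolding s vcat_of_act_def prod.case skew_vcat_str_iff
    using Mt unit_typed_unit_of_lunit[OF H(2)] comp_natural_first_if_assoc_natural_A[OF H(1) Mt R N(2)] corresp_comp_natural_last[OF H(1) Mt R]
      corresp_comp_extranatural_mid[OF H(1) Mt R] lunit_natural_iff[OF L] H(4) vcat_assoc_if_act_pentagon[OF H(1) Mt R N(2) H(5)]
      vcat_left_unit_if_act_left_unit[OF H(1) Mt R L H(4) H(6)] vcat_right_unit_if_act_right_unit[OF H(1) Mt R L H(7)]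
    by (auto simp: comp_of_assoc_def unit_of_lunit_def)
qed

lemma act_of_vcat_skew:
  assumes "skew_vcat_str V A ho hm t"
  shows "skew_actegory_str V A ao am (act_of_vcat t)"
proof -
  obtain M j where t: "t = (M, j)" by (cases t)
  have H: "comp_typed M" "unit_typed j" "comp_natural_first M" "comp_natural_last M" "comp_extranatural_mid M" "unit_extranatural j" "vcat_assoc M" "vcat_left_unit M j" "vcat_right_unit M j"
    using assms unfolding t skew_vcat_str_iff by auto
  have R: "corresp (assoc_of_comp M) M"
    by (rule corresp_assoc_of_comp[OF H(1) H(4,5)])
  have at: "assoc_typed (assoc_of_comp M)" by (rule assoc_of_comp_typed[OF H(1)])
  have L: "lunit_corresp (lunit_of_unit j) j" by (rule lunit_corresp_lunit_of_unit[OF H(2)])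
  have N: "assoc_natural (assoc_of_comp M)"
    using assoc_natural_iff[OF at] corresp_assoc_natural_V[OF at H(1) R] assoc_natural_A_if_comp_natural_first[OF at H(1) R H(3)] by auto
  show ?thesis unfolding t act_of_vcat_def prod.case skew_actegory_str_iff
    using at lunit_typed_lunit_of_unit[OF H(2)] N lunit_natural_iff[OF L] H(6) act_pentagon_if_vcat_assoc[OF at H(1) R H(7)]
      act_left_unit_if_vcat_left_unit[OF at H(1) R L H(8)] act_right_unit_if_vcat_right_unit[OF at H(1) R L H(9)]
    by (auto simp: assoc_of_comp_def lunit_of_unit_def)
qed

lemma act_of_vcat_of_act:
  assumes "skew_actegory_str V A ao am s"
  shows "act_of_vcat (vcat_of_act s) = s"
proof -
  obtain \<alpha> lm where s: "s = (\<alpha>, lm)" by (cases s)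
  have H: "assoc_typed \<alpha>" "lunit_typed lm" "assoc_natural \<alpha>"
    and E: "\<forall>X Y B. \<not> (X \<in> obj V \<and> Y \<in> obj V \<and> B \<in> obj A) \<longrightarrow> \<alpha> X Y B = undefined"
       "\<forall>B. B \<notin> obj A \<longrightarrow> lm B = undefined"
    using assms unfolding s skew_actegory_str_iff by auto
  have N: "assoc_natural_V \<alpha>" using assoc_natural_iff[OF H(1)] H(3) by auto
  have R: "corresp \<alpha> (comp_of_assoc \<alpha>)" by (rule corresp_comp_of_assoc[OF H(1) N(1)])
  have Mt: "comp_typed (comp_of_assoc \<alpha>)" by (rule comp_of_assoc_typed[OF H(1)])
  have assoc_eq: "assoc_of_comp (comp_of_assoc \<alpha>) = \<alpha>"
  proof (intro ext)
    fix X Y B show "assoc_of_comp (comp_of_assoc \<alpha>) X Y B = \<alpha> X Y B"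
      using assoc_eq_psi_comp[OF H(1) Mt R, of X Y B] E(1) by (auto simp: assoc_of_comp_def)
  qed
  have lunit_eq: "lunit_of_unit (unit_of_lunit lm) = lm"
  proof (intro ext)
    fix B show "lunit_of_unit (unit_of_lunit lm) B = lm B"
      using H(2) E(2) by (auto simp: lunit_of_unit_def unit_of_lunit_def lunit_typed_def psi_phi typing_base)
  qed
  show ?thesis unfolding s vcat_of_act_def act_of_vcat_def using assoc_eq lunit_eq by simp
qed

lemma vcat_of_act_of_vcat:
  assumes "skew_vcat_str V A ho hm t"
  shows "vcat_of_act (act_of_vcat t) = t"
proof -
  obtain M j where t: "t = (M, j)" by (cases t)
  have H: "comp_typed M" "unit_typed j" "comp_natural_last M" "comp_extranatural_mid M"
    and E: "\<forall>B C D. \<not> (B \<in> obj A \<and> C \<in> obj A \<and> D \<in> obj A) \<longrightarrow> M B C D = undefined"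
       "\<forall>B. B \<notin> obj A \<longrightarrow> j B = undefined"
    using assms unfolding t skew_vcat_str_iff by auto
  have R: "corresp (assoc_of_comp M) M"
    by (rule corresp_assoc_of_comp[OF H(1) H(3,4)])
  have at: "assoc_typed (assoc_of_comp M)" by (rule assoc_of_comp_typed[OF H(1)])
  have comp_eq: "comp_of_assoc (assoc_of_comp M) = M"
  proof (intro ext)
    fix B C D show "comp_of_assoc (assoc_of_comp M) B C D = M B C D"
    proof (cases "B \<in> obj A \<and> C \<in> obj A \<and> D \<in> obj A")
      case True
      have p: "psi (tns V (ho C D) (ho B C)) B D (M B C D) = eps C D \<cdot> (iV (ho C D) \<star> eps B C) \<cdot> assoc_of_comp M (ho C D) (ho B C) B"
        using psi_comp[OF at H(1) R, of B C D] True by auto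
      have "comp_of_assoc (assoc_of_comp M) B C D = \<phi> (tns V (ho C D) (ho B C)) B D (psi (tns V (ho C D) (ho B C)) B D (M B C D))"
        using True p by (simp add: comp_of_assoc_def)
      also have "\<dots> = M B C D" using comp_typedD[OF H(1), of B C D] True by (simp add: phi_psi')
      finally show ?thesis .
    qed (use E(1) in \<open>auto simp: comp_of_assoc_def\<close>)
  qed
  have unit_eq: "unit_of_lunit (lunit_of_unit j) = j"
  proof (intro ext)
    fix B show "unit_of_lunit (lunit_of_unit j) B = j B"
      using H(2) E(2) by (auto simp: lunit_of_unit_def unit_of_lunit_def unit_typed_def phi_psi' typing_base)
  qed
  show ?thesis unfolding t vcat_of_act_def act_of_vcat_def using comp_eq unit_eq by simp
qed

theorem bij_skew_actegory_skew_vcat: "bij_betw vcat_of_act {s. skew_actegory_str V A ao am s} {s. skew_vcat_str V A ho hm s}"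
  by (rule bij_betw_byWitness[where f' = act_of_vcat]) (auto simp: act_of_vcat_of_act vcat_of_act_of_vcat vcat_of_act_skew act_of_vcat_skew)

lemma lunit_iso_iff_normal:
  assumes L: "lunit_corresp lm j"
  shows "(\<forall>B \<in> obj A. iso_in A (lm B)) \<longleftrightarrow>
    (\<forall>B \<in> obj A. \<forall>C \<in> obj A. bij_betw (\<lambda>f. cmp V (hm (ide A B) f) (j B)) (hom A B C) (hom V (unt V) (ho B C)))"
proof -
  have "iso_in A (lm B) \<longleftrightarrow> (\<forall>C \<in> obj A. bij_betw (\<lambda>f. hm (iA B) f \<bullet> j B) (hom A B C) (hom V II (ho B C)))"
    if B: "B \<in> obj A" for B
  proof -
    note l = lunit_correspD[OF L B]
    have "iso_in A (lm B) \<longleftrightarrow> (\<forall>C \<in> obj A. bij_betw (\<lambda>f. f \<cdot> lm B) (hom A B C) (hom A (ao II B) C))"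
      using precomp_bij_iff_iso_in[OF A_is_cat l(1)] l by simp
    also have "\<dots> \<longleftrightarrow> (\<forall>C \<in> obj A. bij_betw (\<lambda>f. hm (iA B) f \<bullet> j B) (hom A B C) (hom V II (ho B C)))"
    proof (intro ball_cong refl)
      fix C assume C: "C \<in> obj A"
      have im: "(\<lambda>f. f \<cdot> lm B) ` hom A B C \<subseteq> hom A (ao II B) C" using l by (auto simp: hom_def typing_base)
      have "bij_betw (\<lambda>f. f \<cdot> lm B) (hom A B C) (hom A (ao II B) C) \<longleftrightarrow>
         bij_betw (\<phi> II B C \<circ> (\<lambda>f. f \<cdot> lm B)) (hom A B C) (hom V II (ho B C))"
        by (rule bij_betw_comp_iff2[OF phi_bij[OF unt_obj B C] im])
      also have "\<dots> \<longleftrightarrow> bij_betw (\<lambda>f. hm (iA B) f \<bullet> j B) (hom A B C) (hom V II (ho B C))"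
      proof (rule bij_betw_cong)
        fix f assume f: "f \<in> hom A B C"
        have "\<phi> (src V (iV II)) (src A (iA B)) (tgt A f) (f \<cdot> lm B \<cdot> (iV II \<star> iA B)) =
           hm (iA B) f \<bullet> \<phi> (tgt V (iV II)) (tgt A (iA B)) (src A f) (lm B) \<bullet> iV II"
          by (rule phi_nat) (use f l B in \<open>auto simp: hom_def typing_base\<close>)
        then show "(\<phi> II B C \<circ> (\<lambda>f. f \<cdot> lm B)) f = hm (iA B) f \<bullet> j B"
          using f l B by (simp add: hom_def typing am_ide)
      qed
      finally show "bij_betw (\<lambda>f. f \<cdot> lm B) (hom A B C) (hom A (ao II B) C) \<longleftrightarrow>
         bij_betw (\<lambda>f. hm (iA B) f \<bullet> j B) (hom A B C) (hom V II (ho B C))" .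
    qed
    finally show ?thesis .
  qed
  then show ?thesis by auto
qed

lemma tensored_vcat_str_iff:
  "tensored_vcat_str V A ao ho hm \<phi> (M, j) \<longleftrightarrow> skew_vcat_str V A ho hm (M, j) \<and>
    (\<forall>B \<in> obj A. \<forall>C \<in> obj A. bij_betw (\<lambda>f. cmp V (hm (ide A B) f) (j B)) (hom A B C) (hom V (unt V) (ho B C))) \<and>
    tensored_comp M"
  unfolding tensored_vcat_str_def normal_vcat_str_def tensored_comp_def Let_def eta_def by simp

lemma actegory_str_iff:
  "actegory_str V A ao am (\<alpha>, lm) \<longleftrightarrow> skew_actegory_str V A ao am (\<alpha>, lm) \<and>
    (\<forall>X \<in> obj V. \<forall>Y \<in> obj V. \<forall>B \<in> obj A. iso_in A (\<alpha> X Y B)) \<and> (\<forall>B \<in> obj A. iso_in A (lm B))"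
  unfolding actegory_str_def by simp

lemma actegory_iff_tensored:
  assumes MC: "monoidal_closed V" and S: "skew_actegory_str V A ao am s"
  shows "actegory_str V A ao am s \<longleftrightarrow> tensored_vcat_str V A ao ho hm \<phi> (vcat_of_act s)"
proof -
  obtain \<alpha> lm where s: "s = (\<alpha>, lm)" by (cases s)
  have H: "assoc_typed \<alpha>" "lunit_typed lm" "assoc_natural \<alpha>"
    using S unfolding s skew_actegory_str_iff by auto
  have N: "assoc_natural_V \<alpha>" using assoc_natural_iff[OF H(1)] H(3) by auto
  have R: "corresp \<alpha> (comp_of_assoc \<alpha>)" by (rule corresp_comp_of_assoc[OF H(1) N(1)])
  have Mt: "comp_typed (comp_of_assoc \<alpha>)" by (rule comp_of_assoc_typed[OF H(1)])
  have L: "lunit_corresp lm (unit_of_lunit lm)" by (rule lunit_corresp_unit_of_lunit[OF H(2)])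
  have clo: "\<forall>Y \<in> obj V. \<forall>Z \<in> obj V. \<exists>Q ev. is_eval V Y Z Q ev" using MC unfolding monoidal_closed_def by blast
  have sk: "skew_vcat_str V A ho hm (comp_of_assoc \<alpha>, unit_of_lunit lm)" using vcat_of_act_skew[OF S] unfolding s vcat_of_act_def by simp
  have "(\<forall>X \<in> obj V. \<forall>Y \<in> obj V. \<forall>B \<in> obj A. iso_in A (\<alpha> X Y B)) \<longleftrightarrow> tensored_comp (comp_of_assoc \<alpha>)"
    using tensored_if_assoc_iso[OF H(1) Mt R] assoc_iso_if_tensored[OF H(1) Mt R clo] by blast
  moreover note lunit_iso_iff_normal[OF L]
  ultimately show ?thesis
    unfolding s vcat_of_act_def prod.case actegory_str_iff tensored_vcat_str_iff using S sk s by blast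
qed

theorem bij_actegory_tensored_vcat:
  assumes MC: "monoidal_closed V"
  shows "bij_betw vcat_of_act {s. actegory_str V A ao am s} {s. tensored_vcat_str V A ao ho hm \<phi> s}"
proof (rule bij_betw_subset[OF bij_skew_actegory_skew_vcat])
  show "{s. actegory_str V A ao am s} \<subseteq> {s. skew_actegory_str V A ao am s}"
    unfolding actegory_str_def by auto
  show "vcat_of_act ` {s. actegory_str V A ao am s} = {s. tensored_vcat_str V A ao ho hm \<phi> s}"
  proof
    show "vcat_of_act ` {s. actegory_str V A ao am s} \<subseteq> {s. tensored_vcat_str V A ao ho hm \<phi> s}"
    proof
      fix t assume "t \<in> vcat_of_act ` {s. actegory_str V A ao am s}"
      then obtain s where s: "actegory_str V A ao am s" "t = vcat_of_act s" by auto
      have sk: "skew_actegory_str V A ao am s" using s(1) unfolding actegory_str_def by auto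
      show "t \<in> {s. tensored_vcat_str V A ao ho hm \<phi> s}" using actegory_iff_tensored[OF MC sk] s by simp
    qed
    show "{s. tensored_vcat_str V A ao ho hm \<phi> s} \<subseteq> vcat_of_act ` {s. actegory_str V A ao am s}"
    proof
      fix t assume t: "t \<in> {s. tensored_vcat_str V A ao ho hm \<phi> s}"
      have sk: "skew_vcat_str V A ho hm t" using t unfolding tensored_vcat_str_def normal_vcat_str_def by auto
      have g: "skew_actegory_str V A ao am (act_of_vcat t)" by (rule act_of_vcat_skew[OF sk])
      have e: "vcat_of_act (act_of_vcat t) = t" by (rule vcat_of_act_of_vcat[OF sk])
      have "actegory_str V A ao am (act_of_vcat t)" using actegory_iff_tensored[OF MC g] e t by simp
      then show "t \<in> vcat_of_act ` {s. actegory_str V A ao am s}" using e by force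
    qed
  qed
qed

end

theorem mainTheorem6:
  fixes V :: "('o,'v) smcat" and A :: "('p,'q) cat"
    and ao :: "'o \<Rightarrow> 'p \<Rightarrow> 'p" and am :: "'v \<Rightarrow> 'q \<Rightarrow> 'q"
    and ho :: "'p \<Rightarrow> 'p \<Rightarrow> 'o" and hm :: "'q \<Rightarrow> 'q \<Rightarrow> 'v"
    and \<phi> :: "'o \<Rightarrow> 'p \<Rightarrow> 'p \<Rightarrow> 'q \<Rightarrow> 'v"
  assumes "skew_monoidal V"
    and "is_cat A"
    and "bifunctor V A A ao am"
    and "homfunctor A V ho hm"
    and "nat_hom_iso V A ao am ho hm \<phi>"
  shows "(\<exists>F. bij_betw F {s. skew_actegory_str V A ao am s} {s. skew_vcat_str V A ho hm s}) \<and>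
         (monoidal_closed V \<longrightarrow>
            (\<exists>G. bij_betw G {s. actegory_str V A ao am s} {s. tensored_vcat_str V A ao ho hm \<phi> s}))"
proof -
  interpret hom_action_adjunction V A ao am ho hm \<phi> using assms by (unfold_locales) auto
  show ?thesis using bij_skew_actegory_skew_vcat bij_actegory_tensored_vcat by blast
qed

end
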